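(* The Equality Shortest Path problem is undecidable.
   Context: A multidimensional shortest path game consists of a finite arena with vertex set $V$, edges $E\subseteq V\times V$ (each vertex has a successor), two players Eve and Adam owning a partition $V_E\uplus V_A$ of $V$, $t$ weight functions $w_i:E\to\mathbb{Z}$, and a single target set $T\subseteq V$. For a play $\pi=\pi_0\pi_1\dots$, $\mathrm{cost}(\pi)=(+\infty,\dots,+\infty)$ if $\pi$ never visits $T$, and otherwise $\mathrm{cost}(\pi)=(\mathrm{cost}_1(\pi),\dots,\mathrm{cost}_t(\pi))$ with $\mathrm{cost}_i(\pi)=\sum_{k=1}^{\ell}w_i((\pi_{k-1},\pi_k))$ where $\ell$ is the least index with $\pi_\ell\in T$. The Equality Shortest Path problem asks, given such a game, an initial vertex $v_0$ and a threshold $\bar c\in\mathbb{Z}^t$, whether Eve has a strategy $\sigma_E$ such that for every strategy $\sigma_A$ of Adam, the outcome play from $v_0$ satisfies $\mathrm{cost}(\mathrm{out}(\sigma_E,\sigma_A))=\bar c$. *)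

theory Defs
  imports Main "HOL-Library.Nat_Bijection"
begin

datatype recf =
    Z
  | S
  | Id nat
  | Cn recf "recf list"
  | Pr recf recf
  | Mn recf

inductive eval :: "recf \<Rightarrow> nat list \<Rightarrow> nat \<Rightarrow> bool" where
  eval_Z: "eval Z xs 0"
| eval_S: "eval S [x] (Suc x)"
| eval_Id: "i < length xs \<Longrightarrow> eval (Id i) xs (xs ! i)"
| eval_Cn: "length ys = length gs \<Longrightarrow> (\<forall>i < length gs. eval (gs ! i) xs (ys ! i))
            \<Longrightarrow> eval f ys z \<Longrightarrow> eval (Cn f gs) xs z"
| eval_Pr0: "eval f xs y \<Longrightarrow> eval (Pr f g) (0 # xs) y"
| eval_PrS: "eval (Pr f g) (n # xs) y \<Longrightarrow> eval g (n # y # xs) z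
            \<Longrightarrow> eval (Pr f g) (Suc n # xs) z"
| eval_Mn: "eval f (n # xs) 0 \<Longrightarrow> (\<forall>m < n. \<exists>y. eval f (m # xs) y \<and> y \<noteq> 0)
            \<Longrightarrow> eval (Mn f) xs n"

definition decidable_set :: "nat set \<Rightarrow> bool" where
  "decidable_set L \<longleftrightarrow>
     (\<exists>f. \<forall>x. (x \<in> L \<longrightarrow> eval f [x] 0) \<and> (x \<notin> L \<longrightarrow> eval f [x] 1))"

text \<open>Vertices are 0..<num_v. owner ! v = True means v belongs to Eve.
  Each edge (u, v, ws) carries its weight vector ws (length = dimension t).\<close>
record sp_instance =
  num_v :: nat
  owner :: "bool list"
  edges :: "(nat \<times> nat \<times> int list) list"
  target :: "nat list"
  init :: nat
  thr :: "int list"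

definition dim :: "sp_instance \<Rightarrow> nat" where
  "dim I = length (thr I)"

definition edge_set :: "sp_instance \<Rightarrow> (nat \<times> nat) set" where
  "edge_set I = {(u, v). \<exists>ws. (u, v, ws) \<in> set (edges I)}"

definition well_formed :: "sp_instance \<Rightarrow> bool" where
  "well_formed I \<longleftrightarrow>
     length (owner I) = num_v I
   \<and> (\<forall>(u, v, ws) \<in> set (edges I). u < num_v I \<and> v < num_v I \<and> length ws = dim I)
   \<and> distinct (map (\<lambda>(u, v, ws). (u, v)) (edges I))
   \<and> (\<forall>u < num_v I. \<exists>v. (u, v) \<in> edge_set I)
   \<and> (\<forall>x \<in> set (target I). x < num_v I)
   \<and> init I < num_v I"

definition weight :: "sp_instance \<Rightarrow> nat \<Rightarrow> nat \<Rightarrow> nat \<Rightarrow> int" where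
  "weight I i u v = (THE ws. (u, v, ws) \<in> set (edges I)) ! i"

definition is_Eve :: "sp_instance \<Rightarrow> nat \<Rightarrow> bool" where
  "is_Eve I v \<longleftrightarrow> owner I ! v"

definition strategy_Eve :: "sp_instance \<Rightarrow> (nat list \<Rightarrow> nat) \<Rightarrow> bool" where
  "strategy_Eve I \<sigma> \<longleftrightarrow> (\<forall>h. h \<noteq> [] \<longrightarrow> last h < num_v I \<longrightarrow> is_Eve I (last h)
        \<longrightarrow> (last h, \<sigma> h) \<in> edge_set I)"

definition strategy_Adam :: "sp_instance \<Rightarrow> (nat list \<Rightarrow> nat) \<Rightarrow> bool" where
  "strategy_Adam I \<sigma> \<longleftrightarrow> (\<forall>h. h \<noteq> [] \<longrightarrow> last h < num_v I \<longrightarrow> \<not> is_Eve I (last h)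
        \<longrightarrow> (last h, \<sigma> h) \<in> edge_set I)"

fun out_hist :: "sp_instance \<Rightarrow> (nat list \<Rightarrow> nat) \<Rightarrow> (nat list \<Rightarrow> nat) \<Rightarrow> nat \<Rightarrow> nat \<Rightarrow> nat list" where
  "out_hist I \<sigma>E \<sigma>A v0 0 = [v0]"
| "out_hist I \<sigma>E \<sigma>A v0 (Suc k) =
     (let h = out_hist I \<sigma>E \<sigma>A v0 k
      in h @ [if is_Eve I (last h) then \<sigma>E h else \<sigma>A h])"

definition outcome :: "sp_instance \<Rightarrow> (nat list \<Rightarrow> nat) \<Rightarrow> (nat list \<Rightarrow> nat) \<Rightarrow> nat \<Rightarrow> (nat \<Rightarrow> nat)" where
  "outcome I \<sigma>E \<sigma>A v0 k = last (out_hist I \<sigma>E \<sigma>A v0 k)"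

text \<open>Cost of a play: None stands for (+inf, ..., +inf) (target never reached);
  otherwise the vector of the sums of the weights up to the first visit of T.\<close>
definition cost :: "sp_instance \<Rightarrow> (nat \<Rightarrow> nat) \<Rightarrow> int list option" where
  "cost I \<pi> =
     (if \<exists>l. \<pi> l \<in> set (target I)
      then (let l = (LEAST l. \<pi> l \<in> set (target I))
            in Some (map (\<lambda>i. \<Sum>k = 1..l. weight I i (\<pi> (k - 1)) (\<pi> k)) [0..<dim I]))
      else None)"

definition Eve_wins_equality :: "sp_instance \<Rightarrow> bool" where
  "Eve_wins_equality I \<longleftrightarrow>
     (\<exists>\<sigma>E. strategy_Eve I \<sigma>E \<and>
        (\<forall>\<sigma>A. strategy_Adam I \<sigma>A \<longrightarrow> cost I (outcome I \<sigma>E \<sigma>A (init I)) = Some (thr I)))"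

definition enc_ints :: "int list \<Rightarrow> nat" where
  "enc_ints xs = list_encode (map int_encode xs)"

definition encode_instance :: "sp_instance \<Rightarrow> nat" where
  "encode_instance I = list_encode
     [ num_v I,
       list_encode (map (\<lambda>b. if b then 1 else 0) (owner I)),
       list_encode (map (\<lambda>(u, v, ws). list_encode [u, v, enc_ints ws]) (edges I)),
       list_encode (target I),
       init I,
       enc_ints (thr I) ]"

definition EqualitySP :: "nat set" where
  "EqualitySP = {encode_instance I | I. well_formed I \<and> Eve_wins_equality I}"

end

(* A counter machine p is simulated by a game with one weight dimension for the input and one
   for each register.  Eve first cycles at the start node to choose the input m (dimension 0 and
   register 0 grow together) and then executes p.  At each decrement she claims that the
   register is zero or positive, and Adam may challenge the claim by moving to a gadget where
   Eve may adjust the other registers freely but the challenged one not at all (zero claim) or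
   only downwards (positive claim) before going to the target; a halted machine leads to a
   gadget where all registers can be reset.  With threshold (n, 0, ..., 0), Eve wins iff p
   halts on n: she has to pump exactly n, a false claim is caught, and a simulation that never
   halts never reaches the target.

   Mu-recursive functions compile to counter machines, and replacing the threshold of a game by
   the game's own code is mu-recursive.  A decider for the problem therefore yields a machine p
   that halts on the code e of its game with threshold e iff Eve loses that game, that is, iff
   p does not halt on e. *)

theory Submission
  imports Defs
begin

section \<open>Mu-recursive functions\<close>

inductive_cases eval_ZE: "eval Z xs y"
inductive_cases eval_SE: "eval S xs y"
inductive_cases eval_IdE: "eval (Id i) xs y"
inductive_cases eval_CnE: "eval (Cn f gs) xs y"
inductive_cases eval_PrE: "eval (Pr f g) xs y"
inductive_cases eval_MnE: "eval (Mn f) xs y"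

lemma eval_deterministic: "eval f xs y \<Longrightarrow> eval f xs y' \<Longrightarrow> y = y'"
proof (induction arbitrary: y' rule: eval.induct)
  case (eval_Cn ys gs xs f z)
  from eval_Cn.prems obtain ys' where len: "length ys' = length gs"
    and args: "\<forall>i<length gs. eval (gs ! i) xs (ys' ! i)" and "eval f ys' y'"
    by (cases rule: eval_CnE) auto
  moreover have "ys' = ys"
    by (rule nth_equalityI) (use len args eval_Cn.hyps(1) eval_Cn.IH(1) in auto)
  ultimately show ?case using eval_Cn.IH(2) by blast
next
  case (eval_PrS f g n xs y z)
  from eval_PrS.prems obtain y1 where "eval (Pr f g) (n # xs) y1" "eval g (n # y1 # xs) y'"
    by (cases rule: eval_PrE) auto
  then show ?case using eval_PrS.IH by blast
next
  case (eval_Mn f n xs)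
  from eval_Mn.prems have zero: "eval f (y' # xs) 0" and nonzero: "\<forall>m<y'. \<exists>y. eval f (m # xs) y \<and> y \<noteq> 0"
    by (cases rule: eval_MnE, auto)+
  show ?case
  proof (rule linorder_cases)
    assume "n < y'"
    then show ?thesis using nonzero eval_Mn.IH(1) by blast
  next
    assume "y' < n"
    then show ?thesis using zero eval_Mn.IH(2) by blast
  qed
next
  case (eval_Pr0 f xs y g)
  from eval_Pr0.prems show ?case by (cases rule: eval_PrE) (use eval_Pr0.IH in auto)
qed (auto elim: eval_ZE eval_SE eval_IdE)

lemma eval_Cn1: "eval g xs y \<Longrightarrow> eval f [y] z \<Longrightarrow> eval (Cn f [g]) xs z"
  by (rule eval_Cn[where ys = "[y]"]) (auto simp: less_Suc_eq)

lemma eval_Cn2: "eval g1 xs y1 \<Longrightarrow> eval g2 xs y2 \<Longrightarrow> eval f [y1, y2] z \<Longrightarrow> eval (Cn f [g1, g2]) xs z"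
  by (rule eval_Cn[where ys = "[y1, y2]"]) (auto simp: less_Suc_eq)

lemma eval_Id0: "eval (Id 0) (x # xs) x"
  using eval_Id[of 0 "x # xs"] by simp

lemma eval_Id1: "eval (Id 1) (x # y # xs) y"
  using eval_Id[of 1 "x # y # xs"] by simp

definition r_pred :: recf where "r_pred = Pr Z (Id 0)"

lemma eval_r_pred: "eval r_pred [x] (x - 1)"
  unfolding r_pred_def
  by (induction x) (auto intro: eval_PrS eval_Pr0 eval_Z eval_Id0)

definition r_monus :: recf where "r_monus = Cn (Pr (Id 0) (Cn r_pred [Id 1])) [Id 1, Id 0]"

lemma eval_r_monus: "eval r_monus [x, k] (x - k)"
proof -
  have "eval (Pr (Id 0) (Cn r_pred [Id 1])) [k, x] (x - k)"
  proof (induction k)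
    case (Suc k)
    have "eval (Cn r_pred [Id 1]) [k, x - k, x] (x - k - 1)"
      by (rule eval_Cn1[OF eval_Id1 eval_r_pred])
    with Suc show ?case
      using eval_PrS by fastforce
  qed (auto intro: eval_Pr0 eval_Id0)
  then show ?thesis
    unfolding r_monus_def by (rule eval_Cn2[OF eval_Id1 eval_Id0])
qed

definition r_add :: recf where "r_add = Cn (Pr (Id 0) (Cn S [Id 1])) [Id 1, Id 0]"

lemma eval_r_add: "eval r_add [x, k] (x + k)"
proof -
  have "eval (Pr (Id 0) (Cn S [Id 1])) [k, x] (x + k)"
  proof (induction k)
    case (Suc k)
    have "eval (Cn S [Id 1]) [k, x + k, x] (Suc (x + k))"
      by (rule eval_Cn1[OF eval_Id1 eval_S])
    with Suc show ?case
      using eval_PrS by fastforce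
  qed (auto intro: eval_Pr0 eval_Id0)
  then show ?thesis
    unfolding r_add_def by (rule eval_Cn2[OF eval_Id1 eval_Id0])
qed

definition r_triangle :: recf where "r_triangle = Pr Z (Cn r_add [Id 1, Cn S [Id 0]])"

lemma eval_r_triangle: "eval r_triangle [n] (triangle n)"
proof (induction n)
  case (Suc n)
  have "eval (Cn r_add [Id 1, Cn S [Id 0]]) [n, triangle n] (triangle n + Suc n)"
    by (rule eval_Cn2[OF eval_Id1 eval_Cn1[OF eval_Id0 eval_S] eval_r_add])
  with Suc show ?case
    unfolding r_triangle_def using eval_PrS by fastforce
qed (auto simp: r_triangle_def intro: eval.intros)

definition r_prod_encode :: recf where "r_prod_encode = Cn r_add [Cn r_triangle [Cn r_add [Id 0, Id 1]], Id 0]"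

lemma eval_r_prod_encode: "eval r_prod_encode [a, b] (prod_encode (a, b))"
  unfolding r_prod_encode_def prod_encode_def prod.case
  by (rule eval_Cn2[OF eval_Cn1[OF eval_Cn2[OF eval_Id0 eval_Id1 eval_r_add] eval_r_triangle]
        eval_Id0 eval_r_add])

text \<open>If z codes the pair (a, b), then pair_sum z = a + b.\<close>

definition pair_sum :: "nat \<Rightarrow> nat" where
  "pair_sum z = (LEAST s. z < triangle (Suc s))"

lemma pair_sum_bounds: "triangle (pair_sum z) \<le> z" "z < triangle (Suc (pair_sum z))"
proof -
  have "z < triangle (Suc z)"
    by (induction z) auto
  then show upper: "z < triangle (Suc (pair_sum z))"
    unfolding pair_sum_def by (rule LeastI)
  show "triangle (pair_sum z) \<le> z"
  proof (cases "pair_sum z")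
    case (Suc s)
    then have "\<not> z < triangle (Suc s)"
      unfolding pair_sum_def using not_less_Least[of s] by (metis lessI)
    with Suc show ?thesis by simp
  qed simp
qed

lemma prod_decode_pair_sum:
  "prod_decode z = (z - triangle (pair_sum z), pair_sum z - (z - triangle (pair_sum z)))"
proof -
  let ?s = "pair_sum z"
  have "z - triangle ?s \<le> ?s"
    using pair_sum_bounds[of z] by simp
  then have "prod_encode (z - triangle ?s, ?s - (z - triangle ?s)) = z"
    using pair_sum_bounds(1)[of z] by (simp add: prod_encode_def)
  then show ?thesis
    by (metis prod_encode_inverse)
qed

definition r_pair_sum :: recf where "r_pair_sum = Mn (Cn r_monus [Cn S [Id 1], Cn r_triangle [Cn S [Id 0]]])"

lemma eval_r_pair_sum: "eval r_pair_sum [z] (pair_sum z)"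
proof -
  let ?f = "Cn r_monus [Cn S [Id 1], Cn r_triangle [Cn S [Id 0]]]"
  have f: "eval ?f [s, z] (Suc z - triangle (Suc s))" for s
    by (rule eval_Cn2[OF eval_Cn1[OF eval_Id1 eval_S] eval_Cn1[OF eval_Cn1[OF eval_Id0 eval_S]
          eval_r_triangle] eval_r_monus])
  show ?thesis
    unfolding r_pair_sum_def
  proof (rule eval_Mn)
    show "eval ?f [pair_sum z, z] 0"
      using f[of "pair_sum z"] pair_sum_bounds(2)[of z] by simp
    show "\<forall>m<pair_sum z. \<exists>y. eval ?f [m, z] y \<and> y \<noteq> 0"
    proof (intro allI impI)
      fix m assume "m < pair_sum z"
      then have "\<not> z < triangle (Suc m)"
        unfolding pair_sum_def by (rule not_less_Least)
      then show "\<exists>y. eval ?f [m, z] y \<and> y \<noteq> 0"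
        using f[of m] by (intro exI conjI) auto
    qed
  qed
qed

definition r_fst :: recf where "r_fst = Cn r_monus [Id 0, Cn r_triangle [r_pair_sum]]"

lemma eval_r_fst: "eval r_fst [z] (fst (prod_decode z))"
  unfolding r_fst_def prod_decode_pair_sum
  by (auto intro!: eval_Cn2 eval_Cn1 eval_Id0 eval_r_triangle eval_r_pair_sum eval_r_monus)

definition r_snd :: recf where "r_snd = Cn r_monus [r_pair_sum, r_fst]"

lemma eval_r_snd: "eval r_snd [z] (snd (prod_decode z))"
  using eval_r_fst[of z] unfolding r_snd_def prod_decode_pair_sum
  by (auto intro!: eval_Cn2 eval_r_pair_sum eval_r_monus)

definition code_hd :: "nat \<Rightarrow> nat" where
  "code_hd z = fst (prod_decode (z - 1))"

definition code_tl :: "nat \<Rightarrow> nat" where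
  "code_tl z = snd (prod_decode (z - 1))"

definition code_nth :: "nat \<Rightarrow> nat \<Rightarrow> nat" where
  "code_nth k z = code_hd ((code_tl ^^ k) z)"

lemma code_tl_list_encode [simp]: "code_tl (list_encode (x # xs)) = list_encode xs"
  by (simp add: code_tl_def)

lemma code_nth_list_encode [simp]: "k < length xs \<Longrightarrow> code_nth k (list_encode xs) = xs ! k"
proof (induction xs arbitrary: k)
  case (Cons x xs)
  have "code_nth (Suc k) z = code_nth k (code_tl z)" for k z
    by (simp add: code_nth_def funpow_Suc_right del: funpow.simps)
  with Cons show ?case
    by (cases k) (simp_all add: code_nth_def code_hd_def del: list_encode.simps, simp)
qed simp

definition r_hd :: recf where "r_hd = Cn r_fst [Cn r_pred [Id 0]]"

lemma eval_r_hd: "eval r_hd [z] (code_hd z)"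
  unfolding r_hd_def code_hd_def by (rule eval_Cn1[OF eval_Cn1[OF eval_Id0 eval_r_pred] eval_r_fst])

definition r_tl :: recf where "r_tl = Cn r_snd [Cn r_pred [Id 0]]"

lemma eval_r_tl: "eval r_tl [z] (code_tl z)"
  unfolding r_tl_def code_tl_def by (rule eval_Cn1[OF eval_Cn1[OF eval_Id0 eval_r_pred] eval_r_snd])

definition r_nth :: "nat \<Rightarrow> recf" where
  "r_nth k = Cn r_hd [((\<lambda>f. Cn r_tl [f]) ^^ k) (Id 0)]"

lemma eval_r_nth: "eval (r_nth k) [z] (code_nth k z)"
proof -
  have "eval (((\<lambda>f. Cn r_tl [f]) ^^ k) (Id 0)) [z] ((code_tl ^^ k) z)"
    by (induction k) (auto intro: eval_Cn1 eval_r_tl eval_Id0)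
  then show ?thesis
    unfolding r_nth_def code_nth_def by (rule eval_Cn1[OF _ eval_r_hd])
qed

definition r_Cons :: recf where "r_Cons = Cn S [r_prod_encode]"

lemma eval_r_Cons: "eval r_Cons [x, z] (Suc (prod_encode (x, z)))"
  unfolding r_Cons_def by (rule eval_Cn1[OF eval_r_prod_encode eval_S])

fun r_list :: "recf list \<Rightarrow> recf" where
  "r_list [] = Z"
| "r_list (g # gs) = Cn r_Cons [g, r_list gs]"

lemma eval_r_list: "list_all2 (\<lambda>g y. eval g xs y) gs ys \<Longrightarrow> eval (r_list gs) xs (list_encode ys)"
proof (induction gs arbitrary: ys)
  case (Cons g gs)
  then obtain y ys' where "ys = y # ys'" "eval g xs y" "list_all2 (\<lambda>g y. eval g xs y) gs ys'"
    by (cases ys) auto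
  with Cons.IH show ?case
    by (auto intro: eval_Cn2 eval_r_Cons)
qed (auto intro: eval_Z)

section \<open>Counter machines\<close>

datatype instr = Inc nat nat | Dec nat nat nat

type_synonym config = "nat \<times> (nat \<Rightarrow> nat)"

definition step :: "instr list \<Rightarrow> config \<Rightarrow> config" where
  "step p c = (let (pc, R) = c in
     if pc < length p then
       (case p ! pc of
          Inc r j \<Rightarrow> (j, R(r := Suc (R r)))
        | Dec r jz jnz \<Rightarrow> if R r = 0 then (jz, R) else (jnz, R(r := R r - 1)))
     else (pc, R))"

definition runs :: "instr list \<Rightarrow> config \<Rightarrow> config \<Rightarrow> bool" where
  "runs p c c' \<longleftrightarrow> (\<exists>t. (step p ^^ t) c = c')"

lemma runs_refl: "runs p c c"
  unfolding runs_def by (rule exI[of _ 0]) simp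

lemma runs_trans [trans]: "runs p c1 c2 \<Longrightarrow> runs p c2 c3 \<Longrightarrow> runs p c1 c3"
  unfolding runs_def by (metis funpow_add comp_apply)

lemma runs_step: "step p c1 = c2 \<Longrightarrow> runs p c2 c3 \<Longrightarrow> runs p c1 c3"
  unfolding runs_def by (metis funpow_Suc_right comp_apply)

lemma step_halted: "length p \<le> fst c \<Longrightarrow> step p c = c"
  unfolding step_def by (auto split: prod.splits)

lemma funpow_step_halted: "length p \<le> fst c \<Longrightarrow> (step p ^^ k) c = c"
  by (induction k) (auto simp: step_halted)

lemma step_Inc_config:
  "fst c < length p \<Longrightarrow> p ! fst c = Inc r j \<Longrightarrow> step p c = (j, (snd c)(r := Suc (snd c r)))"
  unfolding step_def by (auto split: prod.splits)

lemma step_Dec_config: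
  "fst c < length p \<Longrightarrow> p ! fst c = Dec r jz jnz \<Longrightarrow>
   step p c = (if snd c r = 0 then (jz, snd c) else (jnz, (snd c)(r := snd c r - 1)))"
  unfolding step_def by (auto split: prod.splits)

definition init_regs :: "nat \<Rightarrow> nat \<Rightarrow> nat" where
  "init_regs m = (\<lambda>r. if r = 0 then m else 0)"

definition halts :: "instr list \<Rightarrow> nat \<Rightarrow> bool" where
  "halts p m \<longleftrightarrow> (\<exists>t. length p \<le> fst ((step p ^^ t) (0, init_regs m)))"

definition code_at :: "instr list \<Rightarrow> nat \<Rightarrow> instr list \<Rightarrow> bool" where
  "code_at p b code \<longleftrightarrow> (\<forall>i<length code. b + i < length p \<and> p ! (b + i) = code ! i)"

lemma all_less_add_iff: "(\<forall>i<m + (n :: nat). P i) \<longleftrightarrow> (\<forall>i<m. P i) \<and> (\<forall>i<n. P (m + i))"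
proof
  assume H: "(\<forall>i<m. P i) \<and> (\<forall>i<n. P (m + i))"
  show "\<forall>i<m + n. P i"
  proof (intro allI impI)
    fix i
    assume "i < m + n"
    then show "P i"
      using H[THEN conjunct2, rule_format, of "i - m"] H by (cases "i < m") auto
  qed
qed simp

lemma code_at_append [simp]:
  "code_at p b (c1 @ c2) \<longleftrightarrow> code_at p b c1 \<and> code_at p (b + length c1) c2"
  unfolding code_at_def length_append all_less_add_iff by (simp add: nth_append add.assoc)

lemma code_at_Cons [simp]: "code_at p b (x # xs) \<longleftrightarrow> b < length p \<and> p ! b = x \<and> code_at p (Suc b) xs"
  using code_at_append[of p b "[x]" xs] unfolding code_at_def by auto

lemma code_at_Nil [simp]: "code_at p b []"
  by (simp add: code_at_def)

lemma code_at_nth: "code_at p b code \<Longrightarrow> i < length code \<Longrightarrow> code_at p (b + i) [code ! i]"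
  by (simp add: code_at_def)

lemma step_at_Inc: "code_at p b [Inc r j] \<Longrightarrow> step p (b, R) = (j, R(r := Suc (R r)))"
  by (simp add: step_def)

lemma step_at_Dec_zero: "code_at p b [Dec r jz jnz] \<Longrightarrow> R r = 0 \<Longrightarrow> step p (b, R) = (jz, R)"
  by (simp add: step_def)

lemma step_at_Dec_Suc:
  "code_at p b [Dec r jz jnz] \<Longrightarrow> R r = Suc k \<Longrightarrow> step p (b, R) = (jnz, R(r := k))"
  by (simp add: step_def)

definition clear :: "nat \<Rightarrow> nat \<Rightarrow> instr list" where
  "clear r b = [Dec r (Suc b) b]"

lemma length_clear [simp]: "length (clear r b) = 1"
  by (simp add: clear_def)

lemma runs_clear:
  assumes "code_at p b (clear r b)"
  shows "runs p (b, R) (Suc b, R(r := 0))"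
proof (induction "R r" arbitrary: R)
  case 0
  then have "step p (b, R) = (Suc b, R)"
    using assms by (intro step_at_Dec_zero) (simp_all add: clear_def)
  with 0 show ?case
    by (metis fun_upd_triv runs_refl runs_step)
next
  case (Suc k)
  then have "step p (b, R) = (b, R(r := k))"
    using assms by (intro step_at_Dec_Suc) (simp_all add: clear_def)
  moreover have "runs p (b, R(r := k)) (Suc b, R(r := 0))"
    using Suc(1)[of "R(r := k)"] by simp
  ultimately show ?case
    by (rule runs_step)
qed

text \<open>Copying src to dst empties src into dst and tmp and then restores src from tmp.\<close>

definition copy :: "nat \<Rightarrow> nat \<Rightarrow> nat \<Rightarrow> nat \<Rightarrow> instr list" where
  "copy src dst tmp b = [Dec dst (b + 1) b, Dec tmp (b + 2) (b + 1), Dec src (b + 5) (b + 3),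
     Inc dst (b + 4), Inc tmp (b + 2), Dec tmp (b + 7) (b + 6), Inc src (b + 5)]"

lemma length_copy [simp]: "length (copy src dst tmp b) = 7"
  by (simp add: copy_def)

context
  fixes p src dst tmp b
  assumes copy: "code_at p b (copy src dst tmp b)"
    and distinct: "src \<noteq> dst" "src \<noteq> tmp" "dst \<noteq> tmp"
begin

private lemma at: "code_at p (b + 2) [Dec src (b + 5) (b + 3)]" "code_at p (b + 3) [Inc dst (b + 4)]"
  "code_at p (b + 4) [Inc tmp (b + 2)]" "code_at p (b + 5) [Dec tmp (b + 7) (b + 6)]"
  "code_at p (b + 6) [Inc src (b + 5)]"
  using code_at_nth[OF copy, of 2] code_at_nth[OF copy, of 3] code_at_nth[OF copy, of 4]
    code_at_nth[OF copy, of 5] code_at_nth[OF copy, of 6]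
  by (simp_all add: copy_def del: code_at_Cons)

lemma runs_copy_transfer:
  "R src = k \<Longrightarrow> runs p (b + 2, R) (b + 5, R(src := 0, dst := R dst + k, tmp := R tmp + k))"
proof (induction k arbitrary: R)
  case 0
  then have "step p (b + 2, R) = (b + 5, R)"
    by (rule step_at_Dec_zero[OF at(1)])
  with 0 show ?case
    by (metis add_0_right fun_upd_triv runs_refl runs_step)
next
  case (Suc k)
  let ?R = "R(src := k, dst := Suc (R dst), tmp := Suc (R tmp))"
  have "runs p (b + 2, R) (b + 2, ?R)"
    using step_at_Dec_Suc[OF at(1), where R = R, OF Suc.prems] step_at_Inc[OF at(2)] step_at_Inc[OF at(3)]
    by (metis runs_step runs_refl fun_upd_other distinct)
  also have "runs p (b + 2, ?R) (b + 5, ?R(src := 0, dst := ?R dst + k, tmp := ?R tmp + k))"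
    by (rule Suc.IH) (use distinct in simp)
  also have "?R(src := 0, dst := ?R dst + k, tmp := ?R tmp + k)
      = R(src := 0, dst := R dst + Suc k, tmp := R tmp + Suc k)"
    using distinct by (auto simp: fun_eq_iff)
  finally show ?case .
qed

lemma runs_copy_restore: "R tmp = k \<Longrightarrow> runs p (b + 5, R) (b + 7, R(tmp := 0, src := R src + k))"
proof (induction k arbitrary: R)
  case 0
  then have "step p (b + 5, R) = (b + 7, R)"
    by (rule step_at_Dec_zero[OF at(4)])
  with 0 show ?case
    by (metis add_0_right fun_upd_triv runs_refl runs_step)
next
  case (Suc k)
  let ?R = "R(tmp := k, src := Suc (R src))"
  have "runs p (b + 5, R) (b + 5, ?R)"
    using step_at_Dec_Suc[OF at(4), where R = R, OF Suc.prems] step_at_Inc[OF at(5)]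
    by (metis runs_step runs_refl fun_upd_other distinct)
  also have "runs p (b + 5, ?R) (b + 7, ?R(tmp := 0, src := ?R src + k))"
    by (rule Suc.IH) (use distinct in simp)
  also have "?R(tmp := 0, src := ?R src + k) = R(tmp := 0, src := R src + Suc k)"
    using distinct by (auto simp: fun_eq_iff)
  finally show ?case .
qed

lemma runs_copy: "runs p (b, R) (b + 7, R(dst := R src, tmp := 0))"
proof -
  let ?R = "R(dst := 0, tmp := 0)"
  have "runs p (b, R) (b + 2, ?R)"
    using runs_clear[of p b dst R] runs_clear[of p "Suc b" tmp "R(dst := 0)"] copy
    by (auto simp: copy_def clear_def intro: runs_trans)
  also have "runs p (b + 2, ?R) (b + 5, ?R(src := 0, dst := ?R dst + R src, tmp := ?R tmp + R src))"
    by (rule runs_copy_transfer) (use distinct in simp)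
  also have "runs p \<dots> (b + 7, (?R(src := 0, dst := ?R dst + R src, tmp := ?R tmp + R src))
      (tmp := 0, src := R src))"
    using runs_copy_restore[of "?R(src := 0, dst := ?R dst + R src, tmp := ?R tmp + R src)"] distinct
    by simp
  also have "(?R(src := 0, dst := ?R dst + R src, tmp := ?R tmp + R src))(tmp := 0, src := R src)
      = R(dst := R src, tmp := 0)"
    using distinct by (auto simp: fun_eq_iff)
  finally show ?thesis .
qed
end

text \<open>In compile f args out fr b, the inputs are in the registers args, the result goes to out,
  registers from fr on are scratch space and the code starts at address b.  The code of Pr
  keeps the iterations done in fr, the current value in fr + 1, the iterations still to do in
  fr + 2 and the value of g in fr + 3; the code of Mn keeps the candidate in fr and the value
  of f at it in fr + 1.\<close>

fun compile :: "recf \<Rightarrow> nat list \<Rightarrow> nat \<Rightarrow> nat \<Rightarrow> nat \<Rightarrow> instr list"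
and compile_list :: "recf list \<Rightarrow> nat list \<Rightarrow> nat \<Rightarrow> nat \<Rightarrow> nat \<Rightarrow> instr list" where
  "compile Z args out fr b = clear out b"
| "compile S args out fr b = copy (hd args) out fr b @ [Inc out (b + 8)]"
| "compile (Id i) args out fr b = copy (args ! i) out fr b"
| "compile (Cn f gs) args out fr b =
     (let c1 = compile_list gs args fr (fr + length gs) b
      in c1 @ compile f [fr..<fr + length gs] out (fr + length gs) (b + length c1))"
| "compile (Pr f g) args out fr b =
     (let c1 = compile f (tl args) (fr + 1) (fr + 4) b;
          b1 = b + length c1;
          L = b1 + 8;
          c4 = compile g (fr # Suc fr # tl args) (fr + 3) (fr + 4) (Suc L);
          b4 = Suc L + length c4;
          ex = b4 + 8
      in c1 @ clear fr b1 @ copy (hd args) (fr + 2) (fr + 4) (Suc b1) @ [Dec (fr + 2) ex (Suc L)]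
         @ c4 @ copy (fr + 3) (fr + 1) (fr + 4) b4 @ [Inc fr L] @ copy (fr + 1) out (fr + 4) ex)"
| "compile (Mn f) args out fr b =
     (let c1 = compile f (fr # args) (fr + 1) (fr + 2) (Suc b);
          b2 = Suc b + length c1
      in clear fr b @ c1 @ [Dec (fr + 1) (b2 + 2) (Suc b2), Inc fr (Suc b)] @ copy fr out (fr + 2) (b2 + 2))"
| "compile_list [] args t fr b = []"
| "compile_list (g # gs) args t fr b =
     (let c = compile g args t fr b in c @ compile_list gs args (Suc t) fr (b + length c))"

definition code_computes :: "recf \<Rightarrow> nat list \<Rightarrow> nat \<Rightarrow> bool" where
  "code_computes f xs y \<longleftrightarrow> (\<forall>args out fr b p R. xs = map R args \<longrightarrow> (\<forall>a\<in>set args. a < fr) \<longrightarrow>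
     out < fr \<longrightarrow> out \<notin> set args \<longrightarrow> code_at p b (compile f args out fr b) \<longrightarrow>
     (\<exists>R'. runs p (b, R) (b + length (compile f args out fr b), R') \<and> R' out = y
        \<and> (\<forall>r<fr. r \<noteq> out \<longrightarrow> R' r = R r)))"

lemma code_computesD:
  "code_computes f xs y \<Longrightarrow> xs = map R args \<Longrightarrow> \<forall>a\<in>set args. a < fr \<Longrightarrow> out < fr \<Longrightarrow>
   out \<notin> set args \<Longrightarrow> code_at p b (compile f args out fr b) \<Longrightarrow>
   \<exists>R'. runs p (b, R) (b + length (compile f args out fr b), R') \<and> R' out = y
      \<and> (\<forall>r<fr. r \<noteq> out \<longrightarrow> R' r = R r)"
  unfolding code_computes_def by blast

lemma code_computes_Z: "code_computes Z xs 0"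
  unfolding code_computes_def using runs_clear by fastforce

lemma code_computes_S: "code_computes S [x] (Suc x)"
  unfolding code_computes_def
proof (intro allI impI)
  fix args out fr b p R
  assume xs: "[x] = map R args" and lt: "\<forall>a\<in>set args. a < fr" and out: "out < fr" "out \<notin> set args"
    and at: "code_at p b (compile S args out fr b)"
  obtain a where args: "args = [a]" and x: "x = R a"
    using xs by (cases args) auto
  let ?R = "R(out := R a, fr := 0)"
  have "step p (b + 7, ?R) = (b + 8, ?R(out := Suc (?R out)))"
    using at by (intro step_at_Inc) (simp add: args code_at_nth)
  then have "runs p (b + 7, ?R) (b + 8, ?R(out := Suc (?R out)))"
    using runs_step runs_refl by blast
  moreover have "runs p (b, R) (b + 7, ?R)"
    using at lt out by (intro runs_copy) (auto simp: args)
  ultimately have "runs p (b, R) (b + 8, ?R(out := Suc (?R out)))"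
    by (meson runs_trans)
  then show "\<exists>R'. runs p (b, R) (b + length (compile S args out fr b), R') \<and> R' out = Suc x
      \<and> (\<forall>r<fr. r \<noteq> out \<longrightarrow> R' r = R r)"
    using out x by (auto simp: args)
qed

lemma code_computes_Id: "i < length xs \<Longrightarrow> code_computes (Id i) xs (xs ! i)"
  unfolding code_computes_def
proof (intro allI impI)
  fix args out fr b p R
  assume i: "i < length xs" and xs: "xs = map R args" and lt: "\<forall>a\<in>set args. a < fr"
    and out: "out < fr" "out \<notin> set args" and at: "code_at p b (compile (Id i) args out fr b)"
  have "args ! i < fr" "args ! i \<noteq> out"
    using i xs lt out by (auto simp: nth_mem)
  then have "runs p (b, R) (b + 7, R(out := R (args ! i), fr := 0))"
    using at out by (intro runs_copy) auto
  then show "\<exists>R'. runs p (b, R) (b + length (compile (Id i) args out fr b), R') \<and> R' out = xs ! i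
      \<and> (\<forall>r<fr. r \<noteq> out \<longrightarrow> R' r = R r)"
    using out i xs by (intro exI[of _ "R(out := R (args ! i), fr := 0)"]) auto
qed

lemma runs_compile_list:
  "length ys = length gs \<Longrightarrow> \<forall>i<length gs. code_computes (gs ! i) xs (ys ! i) \<Longrightarrow>
   xs = map R args \<Longrightarrow> \<forall>a\<in>set args. a < t \<Longrightarrow> t + length gs \<le> fr \<Longrightarrow>
   code_at p b (compile_list gs args t fr b) \<Longrightarrow>
   \<exists>R'. runs p (b, R) (b + length (compile_list gs args t fr b), R')
     \<and> (\<forall>i<length gs. R' (t + i) = ys ! i) \<and> (\<forall>r<fr. (r < t \<or> t + length gs \<le> r) \<longrightarrow> R' r = R r)"
proof (induction gs arbitrary: ys t b R)
  case Nil
  then show ?case by (auto intro: runs_refl)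
next
  case (Cons g gs)
  obtain y ys' where ys: "ys = y # ys'"
    using Cons.prems(1) by (cases ys) auto
  let ?c = "compile g args t fr b"
  have at: "code_at p b ?c" "code_at p (b + length ?c) (compile_list gs args (Suc t) fr (b + length ?c))"
    using Cons.prems(6) by (simp_all add: Let_def)
  have g: "code_computes g xs y"
    using Cons.prems(2) ys by force
  have args: "\<forall>a\<in>set args. a < fr" "t < fr" "t \<notin> set args"
    using Cons.prems(4,5) by auto
  obtain R1 where R1: "runs p (b, R) (b + length ?c, R1)" "R1 t = y" "\<forall>r<fr. r \<noteq> t \<longrightarrow> R1 r = R r"
    using code_computesD[OF g Cons.prems(3) args at(1)] by blast
  have "xs = map R1 args"
    using Cons.prems(3) args R1(3) by auto
  moreover have "length ys' = length gs" "\<forall>i<length gs. code_computes (gs ! i) xs (ys' ! i)"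
    "\<forall>a\<in>set args. a < Suc t" "Suc t + length gs \<le> fr"
    using Cons.prems(1,2,4,5) ys by auto
  ultimately obtain R2 where R2:
    "runs p (b + length ?c, R1) (b + length ?c + length (compile_list gs args (Suc t) fr (b + length ?c)), R2)"
    "\<forall>i<length gs. R2 (Suc t + i) = ys' ! i" "\<forall>r<fr. (r < Suc t \<or> Suc t + length gs \<le> r) \<longrightarrow> R2 r = R1 r"
    using Cons.IH[OF _ _ _ _ _ at(2)] by blast
  show ?case
  proof (intro exI conjI)
    show "runs p (b, R) (b + length (compile_list (g # gs) args t fr b), R2)"
      using runs_trans[OF R1(1) R2(1)] by (simp add: Let_def add.assoc)
    show "\<forall>i<length (g # gs). R2 (t + i) = ys ! i"
    proof (intro allI impI)
      fix i assume "i < length (g # gs)"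
      then show "R2 (t + i) = ys ! i"
        using R1 R2 ys Cons.prems(5) by (cases i) auto
    qed
    show "\<forall>r<fr. (r < t \<or> t + length (g # gs) \<le> r) \<longrightarrow> R2 r = R r"
      using R1 R2 by auto
  qed
qed

lemma code_computes_Cn:
  assumes len: "length ys = length gs" and gs: "\<forall>i<length gs. code_computes (gs ! i) xs (ys ! i)"
    and f: "code_computes f ys z"
  shows "code_computes (Cn f gs) xs z"
  unfolding code_computes_def
proof (intro allI impI)
  fix args out fr b p R
  assume xs: "xs = map R args" and lt: "\<forall>a\<in>set args. a < fr" and out: "out < fr" "out \<notin> set args"
    and at: "code_at p b (compile (Cn f gs) args out fr b)"
  let ?k = "length gs"
  let ?c1 = "compile_list gs args fr (fr + ?k) b"
  let ?c2 = "compile f [fr..<fr + ?k] out (fr + ?k) (b + length ?c1)"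
  have at1: "code_at p b ?c1" and at2: "code_at p (b + length ?c1) ?c2"
    using at by (simp_all add: Let_def)
  obtain R1 where R1: "runs p (b, R) (b + length ?c1, R1)" "\<forall>i<?k. R1 (fr + i) = ys ! i"
    "\<forall>r<fr + ?k. (r < fr \<or> fr + ?k \<le> r) \<longrightarrow> R1 r = R r"
    using runs_compile_list[OF len gs xs lt _ at1] by auto
  have "ys = map R1 [fr..<fr + ?k]"
    by (rule nth_equalityI) (use len R1(2) in auto)
  moreover have "\<forall>a\<in>set [fr..<fr + ?k]. a < fr + ?k" "out < fr + ?k" "out \<notin> set [fr..<fr + ?k]"
    using out by auto
  ultimately obtain R2 where R2: "runs p (b + length ?c1, R1) (b + length ?c1 + length ?c2, R2)"
    "R2 out = z" "\<forall>r<fr + ?k. r \<noteq> out \<longrightarrow> R2 r = R1 r"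
    using code_computesD[OF f _ _ _ _ at2] by blast
  show "\<exists>R'. runs p (b, R) (b + length (compile (Cn f gs) args out fr b), R') \<and> R' out = z
      \<and> (\<forall>r<fr. r \<noteq> out \<longrightarrow> R' r = R r)"
  proof (intro exI conjI)
    show "runs p (b, R) (b + length (compile (Cn f gs) args out fr b), R2)"
      using runs_trans[OF R1(1) R2(1)] by (simp add: Let_def add.assoc)
  qed (use R1 R2 in auto)
qed

lemma eval_Pr_below: "eval (Pr f g) (n # xs) y \<Longrightarrow> i \<le> n \<Longrightarrow> \<exists>y'. eval (Pr f g) (i # xs) y'"
proof (induction n arbitrary: y)
  case (Suc n)
  then show ?case
    by (cases "i = Suc n") (auto elim: eval_PrE simp: le_Suc_eq)
qed auto

lemma runs_Pr_loop:
  assumes g: "\<And>xs y. eval g xs y \<Longrightarrow> code_computes g xs y"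
    and ev: "eval (Pr f g) (n # map R0 as) y" and as: "\<forall>a\<in>set as. a < fr"
    and c4: "c4 = compile g (fr # Suc fr # as) (fr + 3) (fr + 4) (Suc L)" and b4: "b4 = Suc L + length c4"
    and at: "code_at p L [Dec (fr + 2) ex (Suc L)]" "code_at p (Suc L) c4"
      "code_at p b4 (copy (fr + 3) (fr + 1) (fr + 4) b4)" "code_at p (b4 + 7) [Inc fr L]"
  shows "i \<le> n \<Longrightarrow> R fr = i \<Longrightarrow> R (fr + 2) = n - i \<Longrightarrow> eval (Pr f g) (i # map R0 as) (R (fr + 1)) \<Longrightarrow>
    \<forall>r<fr. R r = R0 r \<Longrightarrow> \<exists>R'. runs p (L, R) (ex, R') \<and> R' (fr + 1) = y \<and> (\<forall>r<fr. R' r = R0 r)"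
proof (induction "n - i" arbitrary: i R)
  case 0
  then have "step p (L, R) = (ex, R)"
    by (intro step_at_Dec_zero[OF at(1)]) simp
  moreover have "R (fr + 1) = y"
    using 0 ev eval_deterministic by (metis diff_is_0_eq le_antisym)
  ultimately show ?case
    using 0 runs_step runs_refl by blast
next
  case (Suc d)
  then have "Suc i \<le> n" by simp
  then obtain z where z_Pr: "eval (Pr f g) (Suc i # map R0 as) z"
    using eval_Pr_below[OF ev] by blast
  then obtain y' where "eval (Pr f g) (i # map R0 as) y'" "eval g (i # y' # map R0 as) z"
    by (cases rule: eval_PrE) auto
  then have z: "eval g (i # R (fr + 1) # map R0 as) z"
    using Suc.prems(4) eval_deterministic by metis
  let ?R1 = "R(fr + 2 := d)"
  have s1: "step p (L, R) = (Suc L, ?R1)"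
    using Suc.hyps(2) Suc.prems(3) by (intro step_at_Dec_Suc[OF at(1)]) simp
  have args: "i # R (fr + 1) # map R0 as = map ?R1 (fr # Suc fr # as)"
    using Suc.prems as by auto
  have regs: "\<forall>a\<in>set (fr # Suc fr # as). a < fr + 4" "fr + 3 < fr + 4" "fr + 3 \<notin> set (fr # Suc fr # as)"
    using as by auto
  obtain R2 where R2: "runs p (Suc L, ?R1) (b4, R2)" "R2 (fr + 3) = z"
    "\<forall>r<fr + 4. r \<noteq> fr + 3 \<longrightarrow> R2 r = ?R1 r"
    using code_computesD[OF g[OF z] args regs at(2)[unfolded c4]] unfolding b4 c4 by blast
  let ?R3 = "R2(fr + 1 := z, fr + 4 := 0)"
  have s3: "runs p (b4, R2) (b4 + 7, ?R3)"
    using runs_copy[OF at(3), of R2] R2(2) by simp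
  let ?R4 = "?R3(fr := Suc i)"
  have s4: "step p (b4 + 7, ?R3) = (L, ?R4)"
    using step_at_Inc[OF at(4)] R2(3) Suc.prems(2) by simp
  have "d = n - Suc i" "?R4 (fr + 2) = n - Suc i"
    using Suc.hyps(2) R2(3)[rule_format, of "fr + 2"] by simp_all
  moreover have "\<forall>r<fr. ?R4 r = R0 r"
    using R2(3) Suc.prems(5) by simp
  ultimately obtain R' where R': "runs p (L, ?R4) (ex, R')" "R' (fr + 1) = y" "\<forall>r<fr. R' r = R0 r"
    using Suc.hyps(1)[of "Suc i" ?R4] \<open>Suc i \<le> n\<close> z_Pr by auto
  have "runs p (L, R) (ex, R')"
    using runs_step[OF s1 runs_trans[OF R2(1) runs_trans[OF s3 runs_step[OF s4 R'(1)]]]] .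
  with R' show ?case
    by blast
qed

lemma code_at_compile_Pr:
  assumes at: "code_at p b (compile (Pr f g) (a # as) out fr b)"
    and "b1 = b + length (compile f as (fr + 1) (fr + 4) b)" and "L = b1 + 8"
    and "c4 = compile g (fr # Suc fr # as) (fr + 3) (fr + 4) (Suc L)" and "b4 = Suc L + length c4"
    and "ex = b4 + 8"
  shows "code_at p b (compile f as (fr + 1) (fr + 4) b)" "code_at p b1 (clear fr b1)"
    "code_at p (Suc b1) (copy a (fr + 2) (fr + 4) (Suc b1))" "code_at p L [Dec (fr + 2) ex (Suc L)]"
    "code_at p (Suc L) c4" "code_at p b4 (copy (fr + 3) (fr + 1) (fr + 4) b4)"
    "code_at p (b4 + 7) [Inc fr L]" "code_at p ex (copy (fr + 1) out (fr + 4) ex)"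
    "b + length (compile (Pr f g) (a # as) out fr b) = ex + 7"
proof -
  have code: "compile (Pr f g) (a # as) out fr b = compile f as (fr + 1) (fr + 4) b @ clear fr b1
      @ copy a (fr + 2) (fr + 4) (Suc b1) @ [Dec (fr + 2) ex (Suc L)] @ c4
      @ copy (fr + 3) (fr + 1) (fr + 4) b4 @ [Inc fr L] @ copy (fr + 1) out (fr + 4) ex"
    by (simp add: assms(2-) Let_def ac_simps)
  show "code_at p b (compile f as (fr + 1) (fr + 4) b)" "code_at p b1 (clear fr b1)"
    "code_at p (Suc b1) (copy a (fr + 2) (fr + 4) (Suc b1))" "code_at p L [Dec (fr + 2) ex (Suc L)]"
    "code_at p (Suc L) c4" "code_at p b4 (copy (fr + 3) (fr + 1) (fr + 4) b4)"
    "code_at p (b4 + 7) [Inc fr L]" "code_at p ex (copy (fr + 1) out (fr + 4) ex)"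
    using at unfolding code by (simp_all add: assms(2-) ac_simps)
  show "b + length (compile (Pr f g) (a # as) out fr b) = ex + 7"
    unfolding code by (simp add: assms(2-))
qed

lemma code_computes_Pr:
  assumes f: "\<And>xs y. eval f xs y \<Longrightarrow> code_computes f xs y"
    and g: "\<And>xs y. eval g xs y \<Longrightarrow> code_computes g xs y"
    and ev: "eval (Pr f g) xs y"
  shows "code_computes (Pr f g) xs y"
  unfolding code_computes_def
proof (intro allI impI)
  fix args out fr b p R
  assume xs: "xs = map R args" and lt: "\<forall>a\<in>set args. a < fr" and out: "out < fr" "out \<notin> set args"
    and at: "code_at p b (compile (Pr f g) args out fr b)"
  obtain a as where args: "args = a # as"
    using ev xs by (cases args) (auto elim: eval_PrE)
  define b1 where "b1 = b + length (compile f as (fr + 1) (fr + 4) b)"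
  define L where "L = b1 + 8"
  define c4 where "c4 = compile g (fr # Suc fr # as) (fr + 3) (fr + 4) (Suc L)"
  define b4 where "b4 = Suc L + length c4"
  define ex where "ex = b4 + 8"
  note at_parts = code_at_compile_Pr[OF at[unfolded args] b1_def L_def c4_def b4_def ex_def]
  have a: "a < fr" "a \<noteq> out" and as: "\<forall>a\<in>set as. a < fr"
    using lt out args by auto
  have ev': "eval (Pr f g) (R a # map R as) y"
    using ev xs args by simp
  then obtain y0 where y0: "eval (Pr f g) (0 # map R as) y0"
    using eval_Pr_below by blast
  then have "code_computes f (map R as) y0"
    using f by (auto elim: eval_PrE)
  moreover have "\<forall>a\<in>set as. a < fr + 4" "fr + 1 < fr + 4" "fr + 1 \<notin> set as"
    using as by auto
  ultimately obtain R1 where R1: "runs p (b, R) (b1, R1)" "R1 (fr + 1) = y0"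
    "\<forall>r<fr + 4. r \<noteq> fr + 1 \<longrightarrow> R1 r = R r"
    using code_computesD[OF _ refl _ _ _ at_parts(1)] unfolding b1_def by blast
  let ?R2 = "R1(fr := 0, fr + 2 := R a, fr + 4 := 0)"
  have "runs p (b1, R1) (Suc b1, R1(fr := 0))"
    by (rule runs_clear[OF at_parts(2)])
  also have "runs p (Suc b1, R1(fr := 0)) (L, ?R2)"
    using runs_copy[OF at_parts(3), of "R1(fr := 0)"] R1(3) a by (simp add: L_def add.commute)
  finally have init: "runs p (b1, R1) (L, ?R2)" .
  have "?R2 fr = 0" "?R2 (fr + 2) = R a - 0" "eval (Pr f g) (0 # map R as) (?R2 (fr + 1))"
    "\<forall>r<fr. ?R2 r = R r"
    using y0 R1 by auto
  then obtain R' where R': "runs p (L, ?R2) (ex, R')" "R' (fr + 1) = y" "\<forall>r<fr. R' r = R r"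
    using runs_Pr_loop[OF g ev' as c4_def b4_def at_parts(4-7)] by blast
  have "runs p (ex, R') (ex + 7, R'(out := R' (fr + 1), fr + 4 := 0))"
    using runs_copy[OF at_parts(8)] out by simp
  with R1(1) init R'(1) have "runs p (b, R) (ex + 7, R'(out := y, fr + 4 := 0))"
    using R'(2) by (meson runs_trans)
  then show "\<exists>R'. runs p (b, R) (b + length (compile (Pr f g) args out fr b), R') \<and> R' out = y
      \<and> (\<forall>r<fr. r \<noteq> out \<longrightarrow> R' r = R r)"
    unfolding args at_parts(9) using R'(3) out by auto
qed

lemma runs_Mn_loop:
  assumes f: "\<And>xs y. eval f xs y \<Longrightarrow> code_computes f xs y"
    and ev: "eval (Mn f) (map R0 args) n" and args: "\<forall>a\<in>set args. a < fr"
    and c1: "c1 = compile f (fr # args) (fr + 1) (fr + 2) (Suc b)" and b2: "b2 = Suc b + length c1"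
    and at: "code_at p (Suc b) c1" "code_at p b2 [Dec (fr + 1) (b2 + 2) (Suc b2)]"
      "code_at p (Suc b2) [Inc fr (Suc b)]"
  shows "i \<le> n \<Longrightarrow> R fr = i \<Longrightarrow> \<forall>r<fr. R r = R0 r \<Longrightarrow>
    \<exists>R'. runs p (Suc b, R) (b2 + 2, R') \<and> R' fr = n \<and> (\<forall>r<fr. R' r = R0 r)"
proof (induction "n - i" arbitrary: i R)
  case 0
  have regs: "\<forall>a\<in>set (fr # args). a < fr + 2" "fr + 1 < fr + 2" "fr + 1 \<notin> set (fr # args)"
    using args by auto
  from 0 have "i = n" by simp
  have zero: "eval f (i # map R0 args) 0"
    using ev \<open>i = n\<close> by (cases rule: eval_MnE) auto
  have input: "i # map R0 args = map R (fr # args)"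
    using 0 args by auto
  obtain R1 where R1: "runs p (Suc b, R) (b2, R1)" "R1 (fr + 1) = 0"
    "\<forall>r<fr + 2. r \<noteq> fr + 1 \<longrightarrow> R1 r = R r"
    using code_computesD[OF f[OF zero] input regs at(1)[unfolded c1]] unfolding b2 c1 by blast
  have "step p (b2, R1) = (b2 + 2, R1)"
    by (rule step_at_Dec_zero[OF at(2), where R = R1, OF R1(2)])
  then have "runs p (Suc b, R) (b2 + 2, R1)"
    using runs_trans[OF R1(1) runs_step[OF _ runs_refl]] by blast
  then show ?case
    using R1(3) 0 \<open>i = n\<close> by auto
next
  case (Suc d)
  have regs: "\<forall>a\<in>set (fr # args). a < fr + 2" "fr + 1 < fr + 2" "fr + 1 \<notin> set (fr # args)"
    using args by auto
  from Suc have "i < n" by simp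
  then obtain y where nonzero: "eval f (i # map R0 args) (Suc y)"
    using ev by (cases rule: eval_MnE) (auto simp: gr0_conv_Suc)
  have input: "i # map R0 args = map R (fr # args)"
    using Suc.prems args by auto
  obtain R1 where R1: "runs p (Suc b, R) (b2, R1)" "R1 (fr + 1) = Suc y"
    "\<forall>r<fr + 2. r \<noteq> fr + 1 \<longrightarrow> R1 r = R r"
    using code_computesD[OF f[OF nonzero] input regs at(1)[unfolded c1]] unfolding b2 c1 by blast
  let ?R2 = "R1(fr + 1 := y, fr := Suc i)"
  have s1: "step p (b2, R1) = (Suc b2, R1(fr + 1 := y))"
    by (rule step_at_Dec_Suc[OF at(2), where R = R1, OF R1(2)])
  have s2: "step p (Suc b2, R1(fr + 1 := y)) = (Suc b, ?R2)"
    using step_at_Inc[OF at(3)] R1(3) Suc.prems(2) by simp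
  have "d = n - Suc i" "\<forall>r<fr. ?R2 r = R0 r"
    using Suc.hyps(2) R1(3) Suc.prems(3) by auto
  then obtain R' where R': "runs p (Suc b, ?R2) (b2 + 2, R')" "R' fr = n" "\<forall>r<fr. R' r = R0 r"
    using Suc.hyps(1)[of "Suc i" ?R2] \<open>i < n\<close> by auto
  have "runs p (Suc b, R) (b2 + 2, R')"
    using runs_trans[OF R1(1) runs_step[OF s1 runs_step[OF s2 R'(1)]]] .
  with R' show ?case
    by blast
qed

lemma code_computes_Mn:
  assumes f: "\<And>xs y. eval f xs y \<Longrightarrow> code_computes f xs y" and ev: "eval (Mn f) xs n"
  shows "code_computes (Mn f) xs n"
  unfolding code_computes_def
proof (intro allI impI)
  fix args out fr b p R
  assume xs: "xs = map R args" and lt: "\<forall>a\<in>set args. a < fr" and out: "out < fr" "out \<notin> set args"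
    and at: "code_at p b (compile (Mn f) args out fr b)"
  define c1 where "c1 = compile f (fr # args) (fr + 1) (fr + 2) (Suc b)"
  define b2 where "b2 = Suc b + length c1"
  have code: "compile (Mn f) args out fr b = clear fr b @ c1 @ [Dec (fr + 1) (b2 + 2) (Suc b2)]
      @ [Inc fr (Suc b)] @ copy fr out (fr + 2) (b2 + 2)"
    by (simp add: c1_def b2_def Let_def)
  have at_parts: "code_at p b (clear fr b)" "code_at p (Suc b) c1" "code_at p b2 [Dec (fr + 1) (b2 + 2) (Suc b2)]"
    "code_at p (Suc b2) [Inc fr (Suc b)]" "code_at p (b2 + 2) (copy fr out (fr + 2) (b2 + 2))"
    using at unfolding code by (simp_all add: b2_def ac_simps)
  have len: "b + length (compile (Mn f) args out fr b) = b2 + 9"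
    unfolding code by (simp add: b2_def)
  obtain R' where R': "runs p (Suc b, R(fr := 0)) (b2 + 2, R')" "R' fr = n" "\<forall>r<fr. R' r = R r"
    using runs_Mn_loop[OF f ev[unfolded xs] lt c1_def b2_def at_parts(2-4), of 0 "R(fr := 0)"] by auto
  have "runs p (b2 + 2, R') (b2 + 2 + 7, R'(out := n, fr + 2 := 0))"
    using runs_copy[OF at_parts(5), of R'] out R'(2) by simp
  then have "runs p (b, R) (b2 + 9, R'(out := n, fr + 2 := 0))"
    using runs_trans[OF runs_clear[OF at_parts(1)] runs_trans[OF R'(1)]] by (simp add: add.commute)
  then show "\<exists>R'. runs p (b, R) (b + length (compile (Mn f) args out fr b), R') \<and> R' out = n
      \<and> (\<forall>r<fr. r \<noteq> out \<longrightarrow> R' r = R r)"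
    unfolding len using R'(3) out by auto
qed

theorem code_computes_eval: "eval f xs y \<Longrightarrow> code_computes f xs y"
proof (induction f arbitrary: xs y)
  case Z
  then show ?case by (auto elim: eval_ZE intro: code_computes_Z)
next
  case S
  then show ?case by (auto elim: eval_SE intro: code_computes_S)
next
  case (Id i)
  then show ?case by (auto elim: eval_IdE intro: code_computes_Id)
next
  case (Cn f gs)
  then obtain ys where ys: "length ys = length gs" "\<forall>i<length gs. eval (gs ! i) xs (ys ! i)" "eval f ys y"
    by (auto elim: eval_CnE)
  then show ?case
    using Cn.IH by (intro code_computes_Cn) (auto simp: nth_mem)
next
  case (Pr f g)
  then show ?case by (intro code_computes_Pr)
next
  case (Mn f)
  then show ?case by (intro code_computes_Mn)
qed

text \<open>The program for g computes g on register 0 and then halts iff the result is nonzero: its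
  last instruction jumps to itself as long as the result register is empty.\<close>

definition prog :: "recf \<Rightarrow> instr list" where
  "prog g = (let c = compile g [0] 1 2 0 in c @ [Dec 1 (length c) (Suc (length c))])"

lemma funpow_step_fixpoint: "step p c = c \<Longrightarrow> (step p ^^ k) c = c"
  by (induction k) auto

lemma not_halts_at_fixpoint:
  assumes reach: "(step p ^^ t) (0, init_regs m) = c" and stuck: "step p c = c" and pc: "fst c < length p"
  shows "\<not> halts p m"
proof
  assume "halts p m"
  then obtain t' where t': "length p \<le> fst ((step p ^^ t') (0, init_regs m))"
    unfolding halts_def by blast
  have "(step p ^^ (t + t')) (0, init_regs m) = (step p ^^ t') (0, init_regs m)"
    using funpow_step_halted[OF t', of t] by (simp add: funpow_add)
  moreover have "(step p ^^ (t' + t)) (0, init_regs m) = c"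
    using funpow_step_fixpoint[OF stuck, of t'] reach by (simp add: funpow_add)
  ultimately have "(step p ^^ t') (0, init_regs m) = c"
    by (simp add: add.commute)
  then show False
    using t' pc by simp
qed

lemma halts_prog: assumes "eval g [m] y" shows "halts (prog g) m \<longleftrightarrow> y \<noteq> 0"
proof -
  define c where "c = compile g [0] 1 2 0"
  define p where "p = prog g"
  have p: "p = c @ [Dec 1 (length c) (Suc (length c))]"
    unfolding p_def prog_def c_def by (simp add: Let_def)
  then have at: "code_at p 0 c" "code_at p (length c) [Dec 1 (length c) (Suc (length c))]"
    by (simp_all add: code_at_def nth_append)
  have "[m] = map (init_regs m) [0]" "\<forall>a\<in>set [0::nat]. a < 2" "(1::nat) < 2" "(1::nat) \<notin> set [0]"
    by (simp_all add: init_regs_def)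
  then obtain R where "runs p (0, init_regs m) (length c, R)" "R 1 = y"
    using code_computesD[OF code_computes_eval[OF assms] _ _ _ _ at(1)[unfolded c_def]]
    unfolding c_def by auto
  then obtain t where t: "(step p ^^ t) (0, init_regs m) = (length c, R)" and y: "R 1 = y"
    unfolding runs_def by blast
  show ?thesis
  proof (cases y)
    case 0
    then have "step p (length c, R) = (length c, R)"
      using step_at_Dec_zero[OF at(2), where R = R] y by simp
    then show ?thesis
      using not_halts_at_fixpoint[OF t] 0 p unfolding p_def by simp
  next
    case (Suc k)
    then have "(step p ^^ Suc t) (0, init_regs m) = (Suc (length c), R(1 := k))"
      using t step_at_Dec_Suc[OF at(2), where R = R] y by simp
    then show ?thesis
      using Suc unfolding halts_def p_def[symmetric] by (intro iffI exI[of _ "Suc t"]) (simp_all add: p)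
  qed
qed

definition path_weight :: "sp_instance \<Rightarrow> (nat \<Rightarrow> nat) \<Rightarrow> nat \<Rightarrow> nat \<Rightarrow> int" where
  "path_weight I \<pi> l i = (\<Sum>k = 1..l. weight I i (\<pi> (k - 1)) (\<pi> k))"

lemma path_weight_0 [simp]: "path_weight I \<pi> 0 i = 0"
  by (simp add: path_weight_def)

lemma path_weight_Suc: "path_weight I \<pi> (Suc l) i = path_weight I \<pi> l i + weight I i (\<pi> l) (\<pi> (Suc l))"
  by (simp add: path_weight_def)

lemma path_weight_cong: "(\<And>k. k \<le> l \<Longrightarrow> \<pi> k = \<pi>' k) \<Longrightarrow> path_weight I \<pi> l i = path_weight I \<pi>' l i"
  unfolding path_weight_def by (rule sum.cong) auto

lemma cost_eq_Some_thr_iff: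
  "cost I \<pi> = Some (thr I) \<longleftrightarrow> (\<exists>l. \<pi> l \<in> set (target I)) \<and>
     (\<forall>i<dim I. path_weight I \<pi> (LEAST l. \<pi> l \<in> set (target I)) i = thr I ! i)"
proof -
  have "map f [0..<length xs] = xs \<longleftrightarrow> (\<forall>i<length xs. f i = xs ! i)" for f :: "nat \<Rightarrow> int" and xs
    by (metis (mono_tags, lifting) diff_zero length_map length_upt nth_equalityI nth_map_upt add_0)
  then show ?thesis
    unfolding cost_def path_weight_def dim_def by (simp add: Let_def)
qed

lemma out_hist_eq_map: "out_hist I \<sigma>E \<sigma>A v0 k = map (outcome I \<sigma>E \<sigma>A v0) [0..<Suc k]"
proof (induction k)
  case (Suc k)
  have "outcome I \<sigma>E \<sigma>A v0 (Suc k) = last (out_hist I \<sigma>E \<sigma>A v0 (Suc k))"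
    by (simp add: outcome_def)
  with Suc show ?case
    by (simp add: Let_def)
qed (simp add: outcome_def)

lemma outcome_0: "outcome I \<sigma>E \<sigma>A v0 0 = v0"
  by (simp add: outcome_def)

lemma outcome_Suc:
  "outcome I \<sigma>E \<sigma>A v0 (Suc k) =
     (if is_Eve I (outcome I \<sigma>E \<sigma>A v0 k) then \<sigma>E else \<sigma>A) (out_hist I \<sigma>E \<sigma>A v0 k)"
  by (simp add: outcome_def Let_def)

lemma last_out_hist: "last (out_hist I \<sigma>E \<sigma>A v0 k) = outcome I \<sigma>E \<sigma>A v0 k"
  by (simp add: outcome_def)

lemma path_weight_out_hist:
  "path_weight I (nth (out_hist I \<sigma>E \<sigma>A v0 k)) (length (out_hist I \<sigma>E \<sigma>A v0 k) - 1) i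
     = path_weight I (outcome I \<sigma>E \<sigma>A v0) k i"
proof -
  have "length (out_hist I \<sigma>E \<sigma>A v0 k) - 1 = k"
    by (simp add: out_hist_eq_map)
  moreover have "out_hist I \<sigma>E \<sigma>A v0 k ! j = outcome I \<sigma>E \<sigma>A v0 j" if "j \<le> k" for j
    using that by (simp add: out_hist_eq_map nth_map_upt del: upt_Suc)
  ultimately show ?thesis
    using path_weight_cong[of k "nth (out_hist I \<sigma>E \<sigma>A v0 k)" "outcome I \<sigma>E \<sigma>A v0"] by simp
qed

lemma outcome_edge:
  assumes wf: "well_formed I" and \<sigma>E: "strategy_Eve I \<sigma>E" and \<sigma>A: "strategy_Adam I \<sigma>A"
    and v0: "v0 < num_v I"
  shows "outcome I \<sigma>E \<sigma>A v0 k < num_v I \<and> (outcome I \<sigma>E \<sigma>A v0 k, outcome I \<sigma>E \<sigma>A v0 (Suc k)) \<in> edge_set I"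
proof -
  have edge: "(outcome I \<sigma>E \<sigma>A v0 k, outcome I \<sigma>E \<sigma>A v0 (Suc k)) \<in> edge_set I"
    if "outcome I \<sigma>E \<sigma>A v0 k < num_v I" for k
  proof -
    have "out_hist I \<sigma>E \<sigma>A v0 k \<noteq> []"
      by (simp add: out_hist_eq_map)
    from \<sigma>E[unfolded strategy_Eve_def, rule_format, OF this] \<sigma>A[unfolded strategy_Adam_def, rule_format, OF this]
    show ?thesis
      using that by (simp add: outcome_Suc last_out_hist)
  qed
  show ?thesis
  proof (induction k)
    case 0
    then show ?case
      using v0 edge[of 0] by (simp add: outcome_0)
  next
    case (Suc k)
    then have "outcome I \<sigma>E \<sigma>A v0 (Suc k) < num_v I"
      using wf unfolding well_formed_def edge_set_def by fastforce
    with edge show ?case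
      by blast
  qed
qed

section \<open>The game of a counter machine\<close>

fun instr_reg :: "instr \<Rightarrow> nat" where
  "instr_reg (Inc r j) = r"
| "instr_reg (Dec r jz jnz) = r"

definition regs_below :: "instr list \<Rightarrow> nat \<Rightarrow> bool" where
  "regs_below p K \<longleftrightarrow> (\<forall>i<length p. instr_reg (p ! i) < K)"

lemma regs_below_sum_list: "regs_below p (Suc (sum_list (map instr_reg p)))"
  unfolding regs_below_def using member_le_sum_list[of _ "map instr_reg p"] by (simp add: less_Suc_eq_le)

datatype gadget = Check_Final | Check_Zero nat | Check_Pos nat

datatype node = Pump | Target | Instr nat | Claim_Zero nat | Claim_Pos nat | Hub gadget
  | Adjust gadget nat bool

text \<open>Dimension 0 of the weights records the input chosen by pumping, which also adds it to
  register 0; dimension Suc r holds register r.  At Adjust g j s, Eve adds 1 (s) or -1 (not s)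
  to register j.\<close>

fun adjustable :: "gadget \<Rightarrow> nat \<Rightarrow> bool \<Rightarrow> bool" where
  "adjustable Check_Final j s = True"
| "adjustable (Check_Zero r) j s = (j \<noteq> r)"
| "adjustable (Check_Pos r) j s = (j \<noteq> r \<or> \<not> s)"

text \<open>Jumps beyond the program lead to the halting node Instr (length p).  Claim nodes of Inc
  instructions are unreachable and just lead to the target.\<close>

definition instr_node :: "instr list \<Rightarrow> nat \<Rightarrow> node" where
  "instr_node p j = Instr (min j (length p))"

definition succs :: "instr list \<Rightarrow> nat \<Rightarrow> node \<Rightarrow> node list" where
  "succs p K x = (case x of
      Pump \<Rightarrow> [Pump, Instr 0]
    | Target \<Rightarrow> [Target]
    | Instr i \<Rightarrow> if i < length p then
        (case p ! i of Inc r j \<Rightarrow> [instr_node p j] | Dec r jz jnz \<Rightarrow> [Claim_Zero i, Claim_Pos i])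
        else [Hub Check_Final]
    | Claim_Zero i \<Rightarrow> (case p ! i of Inc r j \<Rightarrow> [Target] | Dec r jz jnz \<Rightarrow> [instr_node p jz, Hub (Check_Zero r)])
    | Claim_Pos i \<Rightarrow> (case p ! i of Inc r j \<Rightarrow> [Target] | Dec r jz jnz \<Rightarrow> [instr_node p jnz, Hub (Check_Pos r)])
    | Hub g \<Rightarrow> Target # map (\<lambda>(j, s). Adjust g j s)
        (filter (\<lambda>(j, s). adjustable g j s) (List.product [0..<K] [True, False]))
    | Adjust g j s \<Rightarrow> [Hub g])"

fun delta :: "instr list \<Rightarrow> node \<Rightarrow> node \<Rightarrow> nat \<Rightarrow> int" where
  "delta p Pump Pump d = (if d \<le> 1 then 1 else 0)"
| "delta p (Instr i) x' d = (if i < length p then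
     (case p ! i of
        Inc r j \<Rightarrow> if d = Suc r then 1 else 0
      | Dec r jz jnz \<Rightarrow> if x' = Claim_Pos i \<and> d = Suc r then -1 else 0)
     else 0)"
| "delta p (Hub g) (Adjust g' j s) d = (if d = Suc j then if s then 1 else -1 else 0)"
| "delta p x x' d = 0"

definition eve_node :: "node \<Rightarrow> bool" where
  "eve_node x = (case x of Claim_Zero i \<Rightarrow> False | Claim_Pos i \<Rightarrow> False | _ \<Rightarrow> True)"

definition gadgets :: "nat \<Rightarrow> gadget list" where
  "gadgets K = Check_Final # map Check_Zero [0..<K] @ map Check_Pos [0..<K]"

definition nodes :: "instr list \<Rightarrow> nat \<Rightarrow> node list" where
  "nodes p K = [Pump, Target] @ map Instr [0..<Suc (length p)] @ map Claim_Zero [0..<length p]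
     @ map Claim_Pos [0..<length p] @ map Hub (gadgets K)
     @ map (\<lambda>(g, j, s). Adjust g j s) (List.product (gadgets K) (List.product [0..<K] [True, False]))"

definition valid_gadget :: "nat \<Rightarrow> gadget \<Rightarrow> bool" where
  "valid_gadget K g = (case g of Check_Final \<Rightarrow> True | Check_Zero r \<Rightarrow> r < K | Check_Pos r \<Rightarrow> r < K)"

definition valid_node :: "instr list \<Rightarrow> nat \<Rightarrow> node \<Rightarrow> bool" where
  "valid_node p K x = (case x of
      Instr i \<Rightarrow> i \<le> length p
    | Claim_Zero i \<Rightarrow> i < length p
    | Claim_Pos i \<Rightarrow> i < length p
    | Hub g \<Rightarrow> valid_gadget K g
    | Adjust g j s \<Rightarrow> valid_gadget K g \<and> j < K
    | _ \<Rightarrow> True)"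

lemma set_gadgets: "set (gadgets K) = {g. valid_gadget K g}"
proof -
  have "g \<in> set (gadgets K) \<longleftrightarrow> valid_gadget K g" for g
    by (cases g) (auto simp: gadgets_def valid_gadget_def)
  then show ?thesis by blast
qed

lemma in_set_nodes: "x \<in> set (nodes p K) \<longleftrightarrow> valid_node p K x"
proof -
  have adj: "Adjust g j s \<in> (\<lambda>(g, j, s). Adjust g j s) ` ({g. valid_gadget K g} \<times> {0..<K} \<times> {True, False})
      \<longleftrightarrow> valid_gadget K g \<and> j < K" for g j s
    by force
  show ?thesis
    unfolding nodes_def valid_node_def by (cases x) (auto simp: set_gadgets less_Suc_eq_le adj)
qed

lemma distinct_nodes: "distinct (nodes p K)"
proof -
  have "distinct (gadgets K)"
    unfolding gadgets_def by (auto simp: distinct_map inj_on_def)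
  moreover have "distinct (List.product (gadgets K) (List.product [0..<K] [True, False]))"
    by (intro distinct_product calculation) auto
  ultimately show ?thesis
    unfolding nodes_def by (auto simp: distinct_map inj_on_def gadgets_def)
qed

lemma valid_node_succs:
  assumes "regs_below p K" "valid_node p K x" "x' \<in> set (succs p K x)"
  shows "valid_node p K x'"
  using assms unfolding regs_below_def succs_def valid_node_def instr_node_def valid_gadget_def
  by (cases x) (auto split: if_splits instr.splits gadget.splits)

lemma in_set_succs_Hub:
  "x' \<in> set (succs p K (Hub g)) \<longleftrightarrow> x' = Target \<or> (\<exists>j s. x' = Adjust g j s \<and> j < K \<and> adjustable g j s)"
  unfolding succs_def by auto

lemma succs_nonempty: "succs p K x \<noteq> []"
  by (cases x) (simp_all add: succs_def split: instr.splits)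

definition node_index :: "instr list \<Rightarrow> nat \<Rightarrow> node \<Rightarrow> nat" where
  "node_index p K x = (THE i. i < length (nodes p K) \<and> nodes p K ! i = x)"

definition node_at :: "instr list \<Rightarrow> nat \<Rightarrow> nat \<Rightarrow> node" where
  "node_at p K v = nodes p K ! v"

lemma node_index:
  assumes "valid_node p K x"
  shows "node_index p K x < length (nodes p K)" "node_at p K (node_index p K x) = x"
proof -
  have "\<exists>!i. i < length (nodes p K) \<and> nodes p K ! i = x"
    using distinct_nodes assms by (intro distinct_Ex1) (simp_all add: in_set_nodes)
  from theI'[OF this] show "node_index p K x < length (nodes p K)" "node_at p K (node_index p K x) = x"
    unfolding node_index_def node_at_def by simp_all
qed

lemma node_index_node_at: "v < length (nodes p K) \<Longrightarrow> node_index p K (node_at p K v) = v"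
  unfolding node_index_def node_at_def using distinct_nodes
  by (auto simp: nth_eq_iff_index_eq intro!: the_equality)

lemma valid_node_at: "v < length (nodes p K) \<Longrightarrow> valid_node p K (node_at p K v)"
  unfolding node_at_def using in_set_nodes nth_mem by blast

definition node_weight :: "instr list \<Rightarrow> nat \<Rightarrow> node \<Rightarrow> node \<Rightarrow> int list" where
  "node_weight p K x x' = map (delta p x x') [0..<Suc K]"

definition game :: "instr list \<Rightarrow> nat \<Rightarrow> nat \<Rightarrow> sp_instance" where
  "game p K n = \<lparr>num_v = length (nodes p K), owner = map eve_node (nodes p K),
     edges = concat (map (\<lambda>x. map (\<lambda>x'. (node_index p K x, node_index p K x', node_weight p K x x'))
       (remdups (succs p K x))) (nodes p K)),
     target = [node_index p K Target], init = node_index p K Pump, thr = int n # replicate K 0\<rparr>"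

lemma in_edges_game: "(u, v, ws) \<in> set (edges (game p K n)) \<longleftrightarrow>
   (\<exists>x x'. valid_node p K x \<and> x' \<in> set (succs p K x) \<and> u = node_index p K x \<and> v = node_index p K x'
      \<and> ws = node_weight p K x x')"
  unfolding game_def by (auto simp: in_set_nodes)

lemma distinct_edge_pairs_game:
  assumes regs: "regs_below p K"
  shows "distinct (map (\<lambda>(u, v, ws). (u, v)) (edges (game p K n)))"
proof -
  let ?pairs = "concat (map (\<lambda>x. map (Pair x) (remdups (succs p K x))) (nodes p K))"
  have "distinct xs \<Longrightarrow> distinct (concat (map (\<lambda>x. map (Pair x) (remdups (succs p K x))) xs))" for xs
    by (induction xs) (auto simp: distinct_map inj_on_def)
  moreover have "inj_on (\<lambda>(x, x'). (node_index p K x, node_index p K x')) (set ?pairs)"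
  proof (rule inj_onI, clarsimp)
    fix x y x' y'
    assume "x \<in> set (nodes p K)" "x' \<in> set (succs p K x)" "y \<in> set (nodes p K)" "y' \<in> set (succs p K y)"
      "node_index p K x = node_index p K y" "node_index p K x' = node_index p K y'"
    then show "x = y \<and> x' = y'"
      using valid_node_succs[OF regs] node_index(2) by (metis in_set_nodes)
  qed
  ultimately have "distinct (map (\<lambda>(x, x'). (node_index p K x, node_index p K x')) ?pairs)"
    using distinct_nodes by (simp add: distinct_map)
  then show ?thesis
    unfolding game_def by (simp add: map_concat comp_def)
qed

lemma well_formed_game:
  assumes regs: "regs_below p K"
  shows "well_formed (game p K n)"
proof -
  let ?I = "game p K n"
  have "\<forall>(u, v, ws) \<in> set (edges ?I). u < num_v ?I \<and> v < num_v ?I \<and> length ws = dim ?I"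
  proof clarify
    fix u v ws
    assume "(u, v, ws) \<in> set (edges ?I)"
    then obtain x x' where "valid_node p K x" "valid_node p K x'" "u = node_index p K x"
      "v = node_index p K x'" "ws = node_weight p K x x'"
      unfolding in_edges_game using valid_node_succs[OF regs] by blast
    then show "u < num_v ?I \<and> v < num_v ?I \<and> length ws = dim ?I"
      using node_index(1) by (simp add: game_def dim_def node_weight_def)
  qed
  moreover have "\<exists>v. (u, v) \<in> edge_set ?I" if "u < num_v ?I" for u
  proof -
    have u: "u < length (nodes p K)"
      using that by (simp add: game_def)
    obtain x' where "x' \<in> set (succs p K (node_at p K u))"
      using succs_nonempty by (metis list.set_sel(1))
    then have "(u, node_index p K x', node_weight p K (node_at p K u) x') \<in> set (edges ?I)"
      unfolding in_edges_game using valid_node_at[OF u] node_index_node_at[OF u] by metis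
    then show ?thesis
      by (auto simp: edge_set_def)
  qed
  ultimately show ?thesis
    using distinct_edge_pairs_game[OF regs] node_index[of p K Target] node_index[of p K Pump]
    unfolding well_formed_def by (simp add: game_def valid_node_def)
qed

lemma num_v_game [simp]: "num_v (game p K n) = length (nodes p K)"
  by (simp add: game_def)

lemma dim_game [simp]: "dim (game p K n) = Suc K"
  by (simp add: dim_def game_def)

lemma thr_game: "thr (game p K n) = int n # replicate K 0"
  by (simp add: game_def)

lemma node_at_init_game: "node_at p K (init (game p K n)) = Pump"
  using node_index(2)[of p K Pump] by (simp add: game_def valid_node_def)

lemma is_Eve_game: "v < length (nodes p K) \<Longrightarrow> is_Eve (game p K n) v \<longleftrightarrow> eve_node (node_at p K v)"
  by (simp add: is_Eve_def game_def node_at_def)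

lemma target_game: "v < length (nodes p K) \<Longrightarrow> v \<in> set (target (game p K n)) \<longleftrightarrow> node_at p K v = Target"
  using node_index(2)[of p K Target] node_index_node_at[of v p K] by (auto simp: game_def valid_node_def)

lemma edge_set_game:
  assumes regs: "regs_below p K" and u: "u < length (nodes p K)"
  shows "(u, v) \<in> edge_set (game p K n) \<longleftrightarrow>
    v < length (nodes p K) \<and> node_at p K v \<in> set (succs p K (node_at p K u))"
proof
  assume "(u, v) \<in> edge_set (game p K n)"
  then obtain x x' where "valid_node p K x" "x' \<in> set (succs p K x)" "u = node_index p K x" "v = node_index p K x'"
    unfolding edge_set_def in_edges_game by blast
  then show "v < length (nodes p K) \<and> node_at p K v \<in> set (succs p K (node_at p K u))"
    using valid_node_succs[OF regs] node_index by metis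
next
  assume "v < length (nodes p K) \<and> node_at p K v \<in> set (succs p K (node_at p K u))"
  then have "(u, v, node_weight p K (node_at p K u) (node_at p K v)) \<in> set (edges (game p K n))"
    unfolding in_edges_game using valid_node_at[OF u] node_index_node_at u by metis
  then show "(u, v) \<in> edge_set (game p K n)"
    by (auto simp: edge_set_def)
qed

lemma weight_game:
  assumes regs: "regs_below p K" and u: "u < length (nodes p K)" and v: "v < length (nodes p K)"
    and succ: "node_at p K v \<in> set (succs p K (node_at p K u))" and d: "d < Suc K"
  shows "weight (game p K n) d u v = delta p (node_at p K u) (node_at p K v) d"
proof -
  have "(THE ws. (u, v, ws) \<in> set (edges (game p K n))) = node_weight p K (node_at p K u) (node_at p K v)"
  proof (rule the_equality)
    show "(u, v, node_weight p K (node_at p K u) (node_at p K v)) \<in> set (edges (game p K n))"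
      unfolding in_edges_game using valid_node_at[OF u] node_index_node_at u v succ by metis
    show "ws = node_weight p K (node_at p K u) (node_at p K v)" if "(u, v, ws) \<in> set (edges (game p K n))" for ws
      using that valid_node_succs[OF regs] node_index unfolding in_edges_game by metis
  qed
  with d show ?thesis
    unfolding weight_def node_weight_def by (simp del: upt_Suc)
qed

text \<open>A play of the game seen on named nodes: x k is the node reached after k moves and W k d the
  weight accumulated so far in dimension d.\<close>

definition move :: "instr list \<Rightarrow> nat \<Rightarrow> node \<Rightarrow> (nat \<Rightarrow> int) \<Rightarrow> node \<Rightarrow> (nat \<Rightarrow> int) \<Rightarrow> bool" where
  "move p K x W x' W' \<longleftrightarrow> x' \<in> set (succs p K x) \<and> (\<forall>d<Suc K. W' d = W d + delta p x x' d)"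

locale play =
  fixes p :: "instr list" and K :: nat and x :: "nat \<Rightarrow> node" and W :: "nat \<Rightarrow> nat \<Rightarrow> int"
  assumes regs: "regs_below p K"
    and x_0: "x 0 = Pump" and W_0: "\<And>d. W 0 d = 0"
    and moves: "\<And>k. move p K (x k) (W k) (x (Suc k)) (W (Suc k))"

definition strategy_of :: "instr list \<Rightarrow> nat \<Rightarrow> nat \<Rightarrow> (node \<Rightarrow> (nat \<Rightarrow> int) \<Rightarrow> node) \<Rightarrow> nat list \<Rightarrow> nat" where
  "strategy_of p K n pick h =
     node_index p K (pick (node_at p K (last h)) (path_weight (game p K n) (nth h) (length h - 1)))"

lemma edge_strategy_of:
  assumes regs: "regs_below p K" and u: "u < length (nodes p K)"
    and choice: "pick (node_at p K u) V \<in> set (succs p K (node_at p K u))"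
  shows "(u, node_index p K (pick (node_at p K u) V)) \<in> edge_set (game p K n)"
  using valid_node_succs[OF regs valid_node_at[OF u] choice] node_index choice
  by (simp add: edge_set_game[OF regs u])

lemma strategy_Eve_of:
  assumes "regs_below p K" and "\<And>x V. valid_node p K x \<Longrightarrow> eve_node x \<Longrightarrow> pick x V \<in> set (succs p K x)"
  shows "strategy_Eve (game p K n) (strategy_of p K n pick)"
  unfolding strategy_Eve_def strategy_of_def
  by (auto simp: is_Eve_game intro!: edge_strategy_of[OF assms(1)] assms(2) valid_node_at)

lemma strategy_Adam_of:
  assumes "regs_below p K" and "\<And>x V. valid_node p K x \<Longrightarrow> \<not> eve_node x \<Longrightarrow> pick x V \<in> set (succs p K x)"
  shows "strategy_Adam (game p K n) (strategy_of p K n pick)"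
  unfolding strategy_Adam_def strategy_of_def
  by (auto simp: is_Eve_game intro!: edge_strategy_of[OF assms(1)] assms(2) valid_node_at)

context
  fixes p K n \<sigma>E \<sigma>A
  assumes regs: "regs_below p K"
    and \<sigma>E: "strategy_Eve (game p K n) \<sigma>E" and \<sigma>A: "strategy_Adam (game p K n) \<sigma>A"
begin

abbreviation "game_outcome \<equiv> outcome (game p K n) \<sigma>E \<sigma>A (init (game p K n))"

lemma outcome_game_edge:
  "game_outcome k < length (nodes p K) \<and> game_outcome (Suc k) < length (nodes p K)
    \<and> node_at p K (game_outcome (Suc k)) \<in> set (succs p K (node_at p K (game_outcome k)))"
proof -
  have "init (game p K n) < num_v (game p K n)"
    using well_formed_game[OF regs] by (simp add: well_formed_def)
  from outcome_edge[OF well_formed_game[OF regs] \<sigma>E \<sigma>A this, of k] show ?thesis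
    using edge_set_game[OF regs, of "game_outcome k" "game_outcome (Suc k)" n] by simp
qed

lemma play_outcome_game: "play p K (\<lambda>k. node_at p K (game_outcome k)) (path_weight (game p K n) game_outcome)"
proof
  show "node_at p K (game_outcome 0) = Pump"
    by (simp add: outcome_0 node_at_init_game)
  show "move p K (node_at p K (game_outcome k)) (path_weight (game p K n) game_outcome k)
      (node_at p K (game_outcome (Suc k))) (path_weight (game p K n) game_outcome (Suc k))" for k
    using outcome_game_edge[of k] weight_game[OF regs] by (simp add: move_def path_weight_Suc)
qed (use regs in simp_all)

lemma node_at_outcome_strategy_of:
  assumes turn: "(if eve_node (node_at p K (game_outcome k)) then \<sigma>E else \<sigma>A) = strategy_of p K n pick"
    and choice: "pick (node_at p K (game_outcome k)) (path_weight (game p K n) game_outcome k) \<in> set (succs p K (node_at p K (game_outcome k)))"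
  shows "node_at p K (game_outcome (Suc k)) = pick (node_at p K (game_outcome k)) (path_weight (game p K n) game_outcome k)"
proof -
  have k: "game_outcome k < length (nodes p K)"
    using outcome_game_edge by blast
  have "game_outcome (Suc k) = strategy_of p K n pick (out_hist (game p K n) \<sigma>E \<sigma>A (init (game p K n)) k)"
    using turn by (simp add: outcome_Suc is_Eve_game[OF k])
  also have "\<dots> = node_index p K (pick (node_at p K (game_outcome k)) (path_weight (game p K n) game_outcome k))"
    unfolding strategy_of_def last_out_hist path_weight_out_hist ..
  finally show ?thesis
    using node_index(2) valid_node_succs[OF regs valid_node_at[OF k] choice] by simp
qed

end

definition gadget_node :: "gadget \<Rightarrow> node \<Rightarrow> bool" where
  "gadget_node g x \<longleftrightarrow> x = Hub g \<or> (\<exists>j s. x = Adjust g j s)"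

lemma move_gadget_cases:
  assumes "gadget_node g x" "move p K x W x' W'"
  obtains "x' = Target" "\<forall>d<Suc K. W' d = W d"
  | "x' = Hub g" "\<forall>d<Suc K. W' d = W d"
  | j s where "x = Hub g" "x' = Adjust g j s" "j < K" "adjustable g j s"
      "\<forall>d<Suc K. W' d = W d + (if d = Suc j then if s then 1 else -1 else 0)"
proof -
  from assms(1) consider "x = Hub g" | j s where "x = Adjust g j s"
    unfolding gadget_node_def by blast
  then show thesis
  proof cases
    case 1
    with assms(2) have "x' \<in> set (succs p K (Hub g))"
      by (simp add: move_def)
    then consider "x' = Target" | j s where "x' = Adjust g j s" "j < K" "adjustable g j s"
      unfolding in_set_succs_Hub by blast
    then show thesis
    proof cases
      case 1
      then show thesis
        using that(1) assms(2) \<open>x = Hub g\<close> by (simp add: move_def)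
    next
      case (2 j s)
      then show thesis
        using that(3) assms(2) \<open>x = Hub g\<close> by (simp add: move_def)
    qed
  next
    case (2 j s)
    then show thesis
      using that(2) assms(2) by (simp add: move_def succs_def)
  qed
qed

section \<open>Simulating the machine\<close>

definition encodes :: "nat \<Rightarrow> nat \<Rightarrow> (nat \<Rightarrow> nat) \<Rightarrow> (nat \<Rightarrow> int) \<Rightarrow> bool" where
  "encodes K m R W \<longleftrightarrow> W 0 = int m \<and> (\<forall>j<K. W (Suc j) = int (R j))"

definition reachable :: "instr list \<Rightarrow> nat \<Rightarrow> config \<Rightarrow> bool" where
  "reachable p m c \<longleftrightarrow> (\<exists>t. (step p ^^ t) (0, init_regs m) = c)"

lemma reachable_init: "reachable p m (0, init_regs m)"
  unfolding reachable_def by (metis funpow_0)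

lemma reachable_step: "reachable p m c \<Longrightarrow> reachable p m (step p c)"
  unfolding reachable_def by (metis funpow.simps(2) comp_apply)

lemma reachable_halts: "reachable p m c \<Longrightarrow> length p \<le> fst c \<Longrightarrow> halts p m"
  unfolding reachable_def halts_def by auto

text \<open>At Claim_Pos the decrement that Eve claims to be possible is already applied to the
  weights.\<close>

definition simulates :: "instr list \<Rightarrow> nat \<Rightarrow> nat \<Rightarrow> config \<Rightarrow> node \<Rightarrow> (nat \<Rightarrow> int) \<Rightarrow> bool" where
  "simulates p K m c x W \<longleftrightarrow>
     x = instr_node p (fst c) \<and> encodes K m (snd c) W
   \<or> fst c < length p \<and> (\<exists>r jz jnz. p ! fst c = Dec r jz jnz \<and>
       (x = Claim_Zero (fst c) \<and> encodes K m (snd c) W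
        \<or> x = Claim_Pos (fst c) \<and> encodes K m (snd c) (W(Suc r := W (Suc r) + 1))))"

lemma encodes_unchanged: "encodes K m R W \<Longrightarrow> \<forall>d<Suc K. W' d = W d \<Longrightarrow> encodes K m R W'"
  unfolding encodes_def by auto

lemma regs_below_Dec: "regs_below p K \<Longrightarrow> i < length p \<Longrightarrow> p ! i = Dec r jz jnz \<Longrightarrow> r < K"
  unfolding regs_below_def by (metis instr_reg.simps(2))

definition truthful :: "instr list \<Rightarrow> config \<Rightarrow> node \<Rightarrow> bool" where
  "truthful p c x \<longleftrightarrow> (x = Claim_Zero (fst c) \<longrightarrow> snd c (instr_reg (p ! fst c)) = 0)
     \<and> (x = Claim_Pos (fst c) \<longrightarrow> snd c (instr_reg (p ! fst c)) \<noteq> 0)"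

lemma truthful_Instr [simp]: "truthful p c (Instr i)"
  by (simp add: truthful_def)

lemma move_instr_node:
  assumes regs: "regs_below p K" and enc: "encodes K m (snd c) W"
    and move: "move p K (instr_node p (fst c)) W x' W'"
  obtains (halt) "length p \<le> fst c" "x' = Hub Check_Final" "W' 0 = int m"
  | (run) "fst c < length p" "x' = instr_node p (fst (step p c))" "encodes K m (snd (step p c)) W'"
  | (claim) "fst c < length p" "x' = Claim_Zero (fst c) \<or> x' = Claim_Pos (fst c)" "simulates p K m c x' W'"
proof (cases "fst c < length p")
  case False
  then show thesis
    using halt move enc by (simp add: move_def instr_node_def succs_def encodes_def)
next
  case True
  show thesis
  proof (cases "p ! fst c")
    case (Inc r j)
    have "r < K"
      using regs True Inc unfolding regs_below_def by (metis instr_reg.simps(1))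
    then show thesis
      using run True Inc move enc
      by (auto simp: move_def instr_node_def succs_def encodes_def step_Inc_config)
  next
    case (Dec r jz jnz)
    then show thesis
      using claim True move enc by (auto simp: move_def instr_node_def succs_def encodes_def simulates_def)
  qed
qed

text \<open>Adam's invariant at the gadgets: the machine halts on the pumped input, or the register
  checked has a value that Eve cannot repair inside the gadget.\<close>

fun eve_fails :: "instr list \<Rightarrow> gadget \<Rightarrow> (nat \<Rightarrow> int) \<Rightarrow> bool" where
  "eve_fails p Check_Final W \<longleftrightarrow> (\<exists>m. W 0 = int m \<and> halts p m)"
| "eve_fails p (Check_Zero r) W \<longleftrightarrow> W (Suc r) \<noteq> 0"
| "eve_fails p (Check_Pos r) W \<longleftrightarrow> W (Suc r) < 0"

lemma move_claim_node:
  assumes regs: "regs_below p K" and sim: "simulates p K m c x W"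
    and claim: "x = Claim_Zero (fst c) \<or> x = Claim_Pos (fst c)" and move: "move p K x W x' W'"
  obtains (run) "truthful p c x" "x' = instr_node p (fst (step p c))" "encodes K m (snd (step p c)) W'"
  | (check) g where "x' = Hub g" "valid_gadget K g" "g \<noteq> Check_Final" "W' 0 = int m"
      "eve_fails p g W' \<longleftrightarrow> \<not> truthful p c x"
  | (lie) "\<not> truthful p c x" "\<forall>g. x' \<noteq> Hub g"
proof -
  obtain r jz jnz where pc: "fst c < length p" and Dec: "p ! fst c = Dec r jz jnz"
    and enc: "x = Claim_Zero (fst c) \<and> encodes K m (snd c) W
      \<or> x = Claim_Pos (fst c) \<and> encodes K m (snd c) (W(Suc r := W (Suc r) + 1))"
    using sim claim unfolding simulates_def by (auto simp: instr_node_def)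
  have r: "r < K"
    using regs_below_Dec[OF regs pc Dec] .
  have same: "\<forall>d<Suc K. W' d = W d"
    using move claim pc Dec by (auto simp: move_def succs_def)
  from enc show thesis
  proof (elim disjE conjE)
    assume x: "x = Claim_Zero (fst c)" and enc: "encodes K m (snd c) W"
    then have enc': "encodes K m (snd c) W'" and W': "W' (Suc r) = int (snd c r)" "W' 0 = int m"
      using encodes_unchanged[OF enc same] r by (auto simp: encodes_def)
    have truth: "truthful p c x \<longleftrightarrow> snd c r = 0"
      using x Dec by (simp add: truthful_def)
    have "x' = instr_node p jz \<or> x' = Hub (Check_Zero r)"
      using move x Dec by (simp add: move_def succs_def)
    then show thesis
    proof
      assume "x' = instr_node p jz"
      then show thesis
        using run lie truth enc' pc Dec by (cases "snd c r = 0") (auto simp: step_Dec_config instr_node_def)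
    next
      assume "x' = Hub (Check_Zero r)"
      then show thesis
        using check r W' truth by (simp add: valid_gadget_def)
    qed
  next
    assume x: "x = Claim_Pos (fst c)" and enc: "encodes K m (snd c) (W(Suc r := W (Suc r) + 1))"
    have W': "W' (Suc r) = int (snd c r) - 1" "W' 0 = int m" "\<forall>j<K. j \<noteq> r \<longrightarrow> W' (Suc j) = int (snd c j)"
      using enc same r by (auto simp: encodes_def)
    have truth: "truthful p c x \<longleftrightarrow> snd c r \<noteq> 0"
      using x Dec by (simp add: truthful_def)
    have "x' = instr_node p jnz \<or> x' = Hub (Check_Pos r)"
      using move x Dec by (simp add: move_def succs_def)
    then show thesis
    proof
      assume x': "x' = instr_node p jnz"
      show thesis
      proof (cases "snd c r = 0")
        case False
        then have "encodes K m (snd (step p c)) W'"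
          using W' pc Dec by (auto simp: encodes_def step_Dec_config of_nat_diff)
        then show thesis
          using run x' truth False pc Dec by (simp add: step_Dec_config)
      qed (use lie x' truth in \<open>simp add: instr_node_def\<close>)
    next
      assume "x' = Hub (Check_Pos r)"
      then show thesis
        using check r W' truth by (simp add: valid_gadget_def)
    qed
  qed
qed

section \<open>Adam wins if the machine does not halt\<close>

definition adam_choice :: "instr list \<Rightarrow> node \<Rightarrow> (nat \<Rightarrow> int) \<Rightarrow> node" where
  "adam_choice p x W = (case x of
      Claim_Zero i \<Rightarrow> (case p ! i of
        Dec r jz jnz \<Rightarrow> if W (Suc r) \<noteq> 0 then Hub (Check_Zero r) else instr_node p jz
      | Inc r j \<Rightarrow> Target)
    | Claim_Pos i \<Rightarrow> (case p ! i of
        Dec r jz jnz \<Rightarrow> if W (Suc r) < 0 then Hub (Check_Pos r) else instr_node p jnz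
      | Inc r j \<Rightarrow> Target)
    | _ \<Rightarrow> Target)"

lemma adam_choice_succs: "\<not> eve_node x \<Longrightarrow> adam_choice p x W \<in> set (succs p K x)"
  unfolding adam_choice_def succs_def eve_node_def by (auto split: node.splits instr.splits)

lemma adam_choice_challenges_lies:
  assumes sim: "simulates p K m c x W" and claim: "x = Claim_Zero (fst c) \<or> x = Claim_Pos (fst c)"
    and regs: "regs_below p K"
  shows "(\<exists>g. adam_choice p x W = Hub g) \<longleftrightarrow> \<not> truthful p c x"
proof -
  obtain r jz jnz where pc: "fst c < length p" and Dec: "p ! fst c = Dec r jz jnz"
    and enc: "x = Claim_Zero (fst c) \<and> encodes K m (snd c) W
      \<or> x = Claim_Pos (fst c) \<and> encodes K m (snd c) (W(Suc r := W (Suc r) + 1))"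
    using sim claim unfolding simulates_def by (auto simp: instr_node_def)
  moreover have "r < K"
    using regs_below_Dec[OF regs pc Dec] .
  ultimately show ?thesis
    by (auto simp: adam_choice_def truthful_def encodes_def instr_node_def split: if_splits)
qed

lemma eve_fails_move:
  assumes g: "valid_gadget K g" and fails: "eve_fails p g W" and x: "gadget_node g x \<or> x = Target"
    and move: "move p K x W x' W'"
  shows "eve_fails p g W' \<and> (gadget_node g x' \<or> x' = Target)"
proof -
  have same: "eve_fails p g W'" if "\<forall>d<Suc K. W' d = W d"
    using g fails that by (cases g) (auto simp: valid_gadget_def)
  show ?thesis
  proof (cases "x = Target")
    case True
    then show ?thesis
      using move same by (simp add: move_def succs_def)
  next
    case False
    with x have "gadget_node g x" by simp
    then show ?thesis
    proof (rule move_gadget_cases[OF _ move])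
      fix j s
      assume "x' = Adjust g j s" "j < K" "adjustable g j s"
        "\<forall>d<Suc K. W' d = W d + (if d = Suc j then if s then 1 else -1 else 0)"
      then show ?thesis
        using g fails by (cases g) (auto simp: gadget_node_def valid_gadget_def)
    qed (use same in \<open>auto simp: gadget_node_def\<close>)
  qed
qed

definition adam_inv :: "instr list \<Rightarrow> nat \<Rightarrow> node \<Rightarrow> (nat \<Rightarrow> int) \<Rightarrow> bool" where
  "adam_inv p K x W \<longleftrightarrow>
     x = Pump \<and> (\<exists>m. encodes K m (init_regs m) W)
   \<or> (\<exists>m c. reachable p m c \<and> simulates p K m c x W)
   \<or> (\<exists>g. valid_gadget K g \<and> eve_fails p g W \<and> (gadget_node g x \<or> x = Target))"

lemma adam_inv_move_simulates:
  assumes regs: "regs_below p K" and reach: "reachable p m c" and sim: "simulates p K m c x W"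
    and move: "move p K x W x' W'" and adam: "\<not> eve_node x \<Longrightarrow> x' = adam_choice p x W"
  shows "adam_inv p K x' W'"
proof (cases "x = Claim_Zero (fst c) \<or> x = Claim_Pos (fst c)")
  case claim: True
  then have choice: "x' = adam_choice p x W"
    using adam by (auto simp: eve_node_def)
  from regs sim claim move show ?thesis
  proof (cases rule: move_claim_node)
    case run
    then show ?thesis
      using reachable_step[OF reach] unfolding adam_inv_def simulates_def by blast
  next
    case (check g)
    then show ?thesis
      using adam_choice_challenges_lies[OF sim claim regs] choice
      unfolding adam_inv_def gadget_node_def by auto
  next
    case lie
    then show ?thesis
      using adam_choice_challenges_lies[OF sim claim regs] choice by auto
  qed
next
  case False
  then have x: "x = instr_node p (fst c)" and enc: "encodes K m (snd c) W"
    using sim by (auto simp: simulates_def)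
  from regs enc move[unfolded x] show ?thesis
  proof (cases rule: move_instr_node)
    case halt
    then show ?thesis
      using reachable_halts[OF reach] unfolding adam_inv_def gadget_node_def valid_gadget_def by auto
  next
    case run
    then show ?thesis
      using reachable_step[OF reach] unfolding adam_inv_def simulates_def by blast
  next
    case claim
    then show ?thesis
      using reach unfolding adam_inv_def by blast
  qed
qed

lemma adam_inv_move:
  assumes regs: "regs_below p K" and inv: "adam_inv p K x W" and move: "move p K x W x' W'"
    and adam: "\<not> eve_node x \<Longrightarrow> x' = adam_choice p x W"
  shows "adam_inv p K x' W'"
proof -
  from inv consider (pump) m where "x = Pump" "encodes K m (init_regs m) W"
    | (sim) m c where "reachable p m c" "simulates p K m c x W"
    | (gadget) g where "valid_gadget K g" "eve_fails p g W" "gadget_node g x \<or> x = Target"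
    unfolding adam_inv_def by blast
  then show ?thesis
  proof cases
    case pump
    from move pump(1) have "x' = Pump \<or> x' = Instr 0"
      by (simp add: move_def succs_def)
    then show ?thesis
    proof
      assume "x' = Pump"
      moreover from this have "encodes K (Suc m) (init_regs (Suc m)) W'"
        using move pump by (auto simp: move_def encodes_def init_regs_def)
      ultimately show ?thesis
        unfolding adam_inv_def by blast
    next
      assume "x' = Instr 0"
      moreover from this have "simulates p K m (0, init_regs m) x' W'"
        using move pump by (auto simp: move_def simulates_def instr_node_def encodes_def)
      ultimately show ?thesis
        using reachable_init unfolding adam_inv_def by blast
    qed
  next
    case sim
    then show ?thesis
      using adam_inv_move_simulates[OF regs _ _ move adam] by blast
  next
    case gadget
    then show ?thesis
      using eve_fails_move[OF _ _ _ move] unfolding adam_inv_def by blast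
  qed
qed

locale adam_play = play +
  assumes adam_moves: "\<And>k. \<not> eve_node (x k) \<Longrightarrow> x (Suc k) = adam_choice p (x k) (W k)"
begin

lemma adam_inv: "adam_inv p K (x k) (W k)"
proof (induction k)
  case 0
  have "encodes K 0 (init_regs 0) (W 0)"
    by (simp add: encodes_def init_regs_def W_0)
  then show ?case
    unfolding adam_inv_def x_0 by blast
next
  case (Suc k)
  then show ?case
    using adam_inv_move[OF regs _ moves adam_moves] by blast
qed

lemma halts_if_Target_threshold:
  assumes "x l = Target" "W l 0 = int n" "\<forall>j<K. W l (Suc j) = 0"
  shows "halts p n"
proof -
  have "\<not> simulates p K m c Target W'" for m c W'
    by (simp add: simulates_def instr_node_def)
  then obtain g where "valid_gadget K g" "eve_fails p g (W l)"
    using adam_inv[of l] assms(1) unfolding adam_inv_def by auto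
  with assms(2,3) show ?thesis
    by (cases g) (auto simp: valid_gadget_def)
qed

end

section \<open>Eve wins if the machine halts\<close>

text \<open>At a hub Eve moves some register that the gadget lets her adjust one step towards 0, and
  goes to the target when there is none.\<close>

definition reducible :: "nat \<Rightarrow> gadget \<Rightarrow> (nat \<Rightarrow> int) \<Rightarrow> nat \<Rightarrow> bool" where
  "reducible K g W j \<longleftrightarrow> j < K \<and> W (Suc j) \<noteq> 0 \<and> adjustable g j (W (Suc j) < 0)"

definition eve_choice :: "instr list \<Rightarrow> nat \<Rightarrow> nat \<Rightarrow> node \<Rightarrow> (nat \<Rightarrow> int) \<Rightarrow> node" where
  "eve_choice p K n x W = (case x of
      Pump \<Rightarrow> if W 0 < int n then Pump else Instr 0
    | Instr i \<Rightarrow> if i < length p then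
        (case p ! i of
          Inc r j \<Rightarrow> instr_node p j
        | Dec r jz jnz \<Rightarrow> if W (Suc r) = 0 then Claim_Zero i else Claim_Pos i)
        else Hub Check_Final
    | Hub g \<Rightarrow> if \<exists>j. reducible K g W j
        then (let j = LEAST j. reducible K g W j in Adjust g j (W (Suc j) < 0)) else Target
    | Adjust g j s \<Rightarrow> Hub g
    | _ \<Rightarrow> Target)"

lemma eve_choice_succs: "eve_node x \<Longrightarrow> eve_choice p K n x W \<in> set (succs p K x)"
proof (cases x)
  case (Hub g)
  show ?thesis
  proof (cases "\<exists>j. reducible K g W j")
    case True
    then have "reducible K g W (LEAST j. reducible K g W j)"
      by (rule LeastI_ex)
    with True show ?thesis
      unfolding Hub eve_choice_def in_set_succs_Hub reducible_def by (simp add: Let_def)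
  next
    case False
    then have "eve_choice p K n x W = Target"
      unfolding Hub eve_choice_def by (auto simp only: node.case if_False)
    then show ?thesis
      unfolding Hub in_set_succs_Hub by simp
  qed
qed (auto simp: eve_choice_def succs_def eve_node_def split: instr.splits)

fun eve_ok :: "nat \<Rightarrow> gadget \<Rightarrow> (nat \<Rightarrow> int) \<Rightarrow> bool" where
  "eve_ok n Check_Final W \<longleftrightarrow> W 0 = int n"
| "eve_ok n (Check_Zero r) W \<longleftrightarrow> W 0 = int n \<and> W (Suc r) = 0"
| "eve_ok n (Check_Pos r) W \<longleftrightarrow> W 0 = int n \<and> W (Suc r) \<ge> 0"

definition eve_inv :: "instr list \<Rightarrow> nat \<Rightarrow> nat \<Rightarrow> node \<Rightarrow> (nat \<Rightarrow> int) \<Rightarrow> bool" where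
  "eve_inv p K n x W \<longleftrightarrow>
     x = Pump \<and> (\<exists>m\<le>n. encodes K m (init_regs m) W)
   \<or> (\<exists>c. reachable p n c \<and> simulates p K n c x W \<and> truthful p c x)
   \<or> (\<exists>g. valid_gadget K g \<and> eve_ok n g W \<and> gadget_node g x)
   \<or> x = Target \<and> W 0 = int n \<and> (\<forall>j<K. W (Suc j) = 0)"

lemma eve_ok_move:
  assumes g: "valid_gadget K g" and ok: "eve_ok n g W" and x: "gadget_node g x"
    and move: "move p K x W x' W'" and eve: "x = Hub g \<Longrightarrow> x' = eve_choice p K n x W"
  shows "eve_inv p K n x' W'"
  using x
proof (rule move_gadget_cases[OF _ move])
  assume x': "x' = Target" and same: "\<forall>d<Suc K. W' d = W d"
  then have "x = Hub g"
    using x move by (auto simp: gadget_node_def move_def succs_def)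
  then have "\<not> reducible K g W j" for j
    using eve x' by (auto simp: eve_choice_def Let_def split: if_splits)
  then have "W (Suc j) = 0" if "j < K" for j
    using ok that by (cases g) (auto simp: reducible_def)
  then show ?thesis
    using x' same ok by (cases g) (simp_all add: eve_inv_def)
next
  assume "x' = Hub g" "\<forall>d<Suc K. W' d = W d"
  then show ?thesis
    using g ok by (cases g) (auto simp: eve_inv_def gadget_node_def valid_gadget_def)
next
  fix j s
  assume x: "x = Hub g" and x': "x' = Adjust g j s" and "j < K" "adjustable g j s"
    and W': "\<forall>d<Suc K. W' d = W d + (if d = Suc j then if s then 1 else -1 else 0)"
  have "\<exists>j. reducible K g W j" and j: "j = (LEAST j. reducible K g W j)" and s: "s = (W (Suc j) < 0)"
    using eve[OF x] x' x by (auto simp: eve_choice_def Let_def split: if_splits)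
  then have "reducible K g W j"
    using LeastI_ex by blast
  then have "eve_ok n g W'"
    using ok W' s g by (cases g) (auto simp: reducible_def valid_gadget_def)
  then show ?thesis
    using g x' unfolding eve_inv_def gadget_node_def by blast
qed

lemma eve_ok_iff_not_fails: "g \<noteq> Check_Final \<Longrightarrow> eve_ok n g W \<longleftrightarrow> W 0 = int n \<and> \<not> eve_fails p g W"
  by (cases g) auto

lemma eve_choice_truthful:
  assumes regs: "regs_below p K" and enc: "encodes K m (snd c) W" and pc: "fst c < length p"
  shows "truthful p c (eve_choice p K n (Instr (fst c)) W)"
  using regs_below_Dec[OF regs pc] enc pc
  by (cases "p ! fst c") (auto simp: eve_choice_def truthful_def encodes_def instr_node_def)

lemma eve_simulates_move:
  assumes regs: "regs_below p K" and sim: "simulates p K n c x W" and truth: "truthful p c x"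
    and move: "move p K x W x' W'" and eve: "eve_node x \<Longrightarrow> x' = eve_choice p K n x W"
  shows "(\<exists>g. valid_gadget K g \<and> eve_ok n g W' \<and> x' = Hub g)
    \<or> fst c < length p \<and> simulates p K n (step p c) x' W' \<and> truthful p (step p c) x'
    \<or> x = Instr (fst c) \<and> simulates p K n c x' W' \<and> truthful p c x' \<and> (\<forall>i. x' \<noteq> Instr i)"
proof (cases "x = Claim_Zero (fst c) \<or> x = Claim_Pos (fst c)")
  case claim: True
  then have "fst c < length p"
    using sim by (auto simp: simulates_def instr_node_def)
  from regs sim claim move show ?thesis
  proof (cases rule: move_claim_node)
    case run
    then show ?thesis
      using \<open>fst c < length p\<close> by (simp add: simulates_def instr_node_def)
  next
    case (check g)
    then show ?thesis
      using truth eve_ok_iff_not_fails by blast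
  qed (use truth in simp)
next
  case False
  then have x: "x = instr_node p (fst c)" and enc: "encodes K n (snd c) W"
    using sim by (auto simp: simulates_def)
  from regs enc move[unfolded x] show ?thesis
  proof (cases rule: move_instr_node)
    case halt
    then show ?thesis
      by (simp add: valid_gadget_def)
  next
    case run
    then show ?thesis
      by (simp add: simulates_def instr_node_def)
  next
    case claim
    then have "x = Instr (fst c)" "truthful p c x'"
      using x eve eve_choice_truthful[OF regs enc] by (auto simp: instr_node_def eve_node_def)
    with claim show ?thesis
      by auto
  qed
qed

lemma eve_inv_move:
  assumes regs: "regs_below p K" and inv: "eve_inv p K n x W" and move: "move p K x W x' W'"
    and eve: "eve_node x \<Longrightarrow> x' = eve_choice p K n x W"
  shows "eve_inv p K n x' W'"
proof -
  from inv consider (pump) m where "x = Pump" "m \<le> n" "encodes K m (init_regs m) W"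
    | (sim) c where "reachable p n c" "simulates p K n c x W" "truthful p c x"
    | (gadget) g where "valid_gadget K g" "eve_ok n g W" "gadget_node g x"
    | (target) "x = Target" "W 0 = int n" "\<forall>j<K. W (Suc j) = 0"
    unfolding eve_inv_def by blast
  then show ?thesis
  proof cases
    case pump
    show ?thesis
    proof (cases "m < n")
      case True
      then have "x' = Pump" "encodes K (Suc m) (init_regs (Suc m)) W'"
        using move pump eve by (auto simp: move_def encodes_def init_regs_def eve_choice_def eve_node_def)
      then show ?thesis
        using True unfolding eve_inv_def by auto
    next
      case False
      then have "x' = Instr 0" "simulates p K n (0, init_regs n) x' W'"
        using move pump eve by (auto simp: move_def simulates_def instr_node_def encodes_def
            eve_choice_def eve_node_def)
      then show ?thesis
        using reachable_init unfolding eve_inv_def by auto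
    qed
  next
    case sim
    then show ?thesis
      using eve_simulates_move[OF regs sim(2,3) move eve] reachable_step[OF sim(1)]
      unfolding eve_inv_def gadget_node_def by blast
  next
    case gadget
    moreover have "x = Hub g \<Longrightarrow> x' = eve_choice p K n x W"
      using eve by (simp add: eve_node_def)
    ultimately show ?thesis
      using eve_ok_move[OF _ _ _ move] by blast
  next
    case target
    then show ?thesis
      using move by (simp add: move_def succs_def eve_inv_def)
  qed
qed

definition potential :: "nat \<Rightarrow> (nat \<Rightarrow> int) \<Rightarrow> nat" where
  "potential K W = (\<Sum>j<K. nat \<bar>W (Suc j)\<bar>)"

lemma potential_cong: "\<forall>d<Suc K. W' d = W d \<Longrightarrow> potential K W' = potential K W"
  unfolding potential_def by (intro sum.cong) auto

lemma potential_reduce: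
  assumes "reducible K g W j"
    and "\<forall>d<Suc K. W' d = W d + (if d = Suc j then if W (Suc j) < 0 then 1 else -1 else 0)"
  shows "potential K W' < potential K W"
  unfolding potential_def
proof (rule sum_strict_mono_ex1)
  show "\<forall>i\<in>{..<K}. nat \<bar>W' (Suc i)\<bar> \<le> nat \<bar>W (Suc i)\<bar>"
    using assms by (auto simp: reducible_def)
  show "\<exists>i\<in>{..<K}. nat \<bar>W' (Suc i)\<bar> < nat \<bar>W (Suc i)\<bar>"
    using assms by (intro bexI[of _ j]) (auto simp: reducible_def)
qed simp

definition steps_to_halt :: "instr list \<Rightarrow> config \<Rightarrow> nat" where
  "steps_to_halt p c = (LEAST t. length p \<le> fst ((step p ^^ t) c))"

lemma steps_to_halt_step:
  assumes "halts p n" "reachable p n c" "fst c < length p"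
  shows "steps_to_halt p (step p c) < steps_to_halt p c"
proof -
  obtain t where t: "(step p ^^ t) (0, init_regs n) = c"
    using assms(2) unfolding reachable_def by blast
  obtain T where T: "length p \<le> fst ((step p ^^ T) (0, init_regs n))"
    using assms(1) unfolding halts_def by blast
  have "(step p ^^ T) c = (step p ^^ (T + t)) (0, init_regs n)"
    unfolding t[symmetric] by (simp add: funpow_add)
  also have "\<dots> = (step p ^^ t) ((step p ^^ T) (0, init_regs n))"
    by (metis add.commute comp_apply funpow_add)
  also have "\<dots> = (step p ^^ T) (0, init_regs n)"
    by (rule funpow_step_halted[OF T])
  finally have "\<exists>t. length p \<le> fst ((step p ^^ t) c)"
    using T by metis
  then have halted: "length p \<le> fst ((step p ^^ steps_to_halt p c) c)"
    unfolding steps_to_halt_def by (rule LeastI_ex)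
  then obtain d where d: "steps_to_halt p c = Suc d"
    using assms(3) by (cases "steps_to_halt p c") auto
  then have "length p \<le> fst ((step p ^^ d) (step p c))"
    using halted by (simp add: funpow_Suc_right del: funpow.simps)
  then have "steps_to_halt p (step p c) \<le> d"
    unfolding steps_to_halt_def by (rule Least_le)
  with d show ?thesis
    by simp
qed

locale eve_play = play +
  fixes n :: nat
  assumes eve_moves: "\<And>k. eve_node (x k) \<Longrightarrow> x (Suc k) = eve_choice p K n (x k) (W k)"
begin

lemma eve_inv: "eve_inv p K n (x k) (W k)"
proof (induction k)
  case 0
  have "encodes K 0 (init_regs 0) (W 0)"
    by (simp add: encodes_def init_regs_def W_0)
  then show ?case
    unfolding eve_inv_def x_0 by blast
next
  case (Suc k)
  then show ?case
    using eve_inv_move[OF regs _ moves eve_moves] by blast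
qed

lemma Target_threshold: "x l = Target \<Longrightarrow> W l 0 = int n \<and> (\<forall>j<K. W l (Suc j) = 0)"
  using eve_inv[of l] by (auto simp: eve_inv_def simulates_def instr_node_def gadget_node_def)

lemma succ: "x (Suc k) \<in> set (succs p K (x k))"
  using moves[of k] by (simp add: move_def)

lemma W_Suc: "d < Suc K \<Longrightarrow> W (Suc k) d = W k d + delta p (x k) (x (Suc k)) d"
  using moves[of k] by (simp add: move_def)

lemma Hub_reaches_Target: "x k = Hub g \<Longrightarrow> \<exists>l. x l = Target"
proof (induction "potential K (W k)" arbitrary: k rule: less_induct)
  case less
  show ?case
  proof (cases "\<exists>j. reducible K g (W k) j")
    case False
    then have "x (Suc k) = Target"
      using eve_moves[of k] less.prems by (auto simp: eve_node_def eve_choice_def)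
    then show ?thesis
      by blast
  next
    case True
    define j where "j = (LEAST j. reducible K g (W k) j)"
    have red: "reducible K g (W k) j"
      unfolding j_def using True by (rule LeastI_ex)
    have x1: "x (Suc k) = Adjust g j (W k (Suc j) < 0)"
      using eve_moves[of k] less.prems True by (simp add: eve_node_def eve_choice_def j_def Let_def)
    then have x2: "x (Suc (Suc k)) = Hub g"
      using succ[of "Suc k"] by (simp add: succs_def)
    have "potential K (W (Suc k)) < potential K (W k)"
      using red W_Suc[of _ k] less.prems x1 by (intro potential_reduce) auto
    moreover have "potential K (W (Suc (Suc k))) = potential K (W (Suc k))"
      using W_Suc[of _ "Suc k"] x1 by (intro potential_cong) simp
    ultimately show ?thesis
      using less.hyps[of "Suc (Suc k)"] x2 by simp
  qed
qed

text \<open>While Eve simulates the halting machine, every move either enters a hub or decreases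
  twice the number of steps the machine still needs plus one for being at an instruction node.\<close>

lemma simulation_reaches_Target:
  assumes "halts p n"
  shows "reachable p n c \<Longrightarrow> simulates p K n c (x k) (W k) \<Longrightarrow> truthful p c (x k) \<Longrightarrow> \<exists>l. x l = Target"
proof (induction "2 * steps_to_halt p c + (if x k = Instr (fst c) then 1 else 0)" arbitrary: c k
    rule: less_induct)
  case less
  from eve_simulates_move[OF regs less.prems(2,3) moves eve_moves]
  consider (hub) g where "x (Suc k) = Hub g"
    | (step) "fst c < length p" "simulates p K n (step p c) (x (Suc k)) (W (Suc k))"
        "truthful p (step p c) (x (Suc k))"
    | (claim) "x k = Instr (fst c)" "simulates p K n c (x (Suc k)) (W (Suc k))"
        "truthful p c (x (Suc k))" "\<forall>i. x (Suc k) \<noteq> Instr i"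
    by blast
  then show ?case
  proof cases
    case hub
    then show ?thesis
      using Hub_reaches_Target by blast
  next
    case step
    then have "steps_to_halt p (step p c) < steps_to_halt p c"
      using steps_to_halt_step[OF assms less.prems(1)] by blast
    then show ?thesis
      using less.hyps[of "step p c" "Suc k"] step reachable_step[OF less.prems(1)] by simp
  next
    case claim
    then show ?thesis
      using less.hyps[of c "Suc k"] less.prems(1) by simp
  qed
qed

lemma Pump_reaches_Target:
  assumes "halts p n"
  shows "x k = Pump \<Longrightarrow> m \<le> n \<Longrightarrow> encodes K m (init_regs m) (W k) \<Longrightarrow> \<exists>l. x l = Target"
proof (induction "n - m" arbitrary: m k)
  case 0
  then have "x (Suc k) = Instr 0" "simulates p K n (0, init_regs n) (x (Suc k)) (W (Suc k))"
    using eve_moves[of k] moves[of k]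
    by (auto simp: eve_node_def eve_choice_def move_def encodes_def simulates_def instr_node_def)
  then show ?case
    using simulation_reaches_Target[OF assms reachable_init, of "Suc k"] by simp
next
  case (Suc d)
  then have "x (Suc k) = Pump" "encodes K (Suc m) (init_regs (Suc m)) (W (Suc k))"
    using eve_moves[of k] moves[of k]
    by (auto simp: eve_node_def eve_choice_def move_def encodes_def init_regs_def)
  moreover have "d = n - Suc m" "Suc m \<le> n"
    using Suc.hyps(2) by simp_all
  ultimately show ?case
    using Suc.hyps(1) by blast
qed

lemma reaches_Target: "halts p n \<Longrightarrow> \<exists>l. x l = Target"
  using Pump_reaches_Target[of 0 0] x_0 W_0 by (simp add: encodes_def init_regs_def)

end

lemma cost_outcome_game:
  assumes regs: "regs_below p K" and \<sigma>E: "strategy_Eve (game p K n) \<sigma>E" and \<sigma>A: "strategy_Adam (game p K n) \<sigma>A"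
  defines "\<pi> \<equiv> outcome (game p K n) \<sigma>E \<sigma>A (init (game p K n))"
  defines "l \<equiv> LEAST l. node_at p K (\<pi> l) = Target"
  shows "cost (game p K n) \<pi> = Some (thr (game p K n)) \<longleftrightarrow> (\<exists>l. node_at p K (\<pi> l) = Target)
    \<and> path_weight (game p K n) \<pi> l 0 = int n \<and> (\<forall>j<K. path_weight (game p K n) \<pi> l (Suc j) = 0)"
proof -
  have "\<pi> k \<in> set (target (game p K n)) \<longleftrightarrow> node_at p K (\<pi> k) = Target" for k
    using target_game outcome_game_edge[OF regs \<sigma>E \<sigma>A] unfolding \<pi>_def by blast
  then show ?thesis
    unfolding cost_eq_Some_thr_iff l_def by (auto simp: thr_game less_Suc_eq_0_disj)
qed

lemma halts_if_Eve_wins_game: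
  assumes regs: "regs_below p K" and wins: "Eve_wins_equality (game p K n)"
  shows "halts p n"
proof -
  obtain \<sigma>E where \<sigma>E: "strategy_Eve (game p K n) \<sigma>E" and wins: "\<And>\<sigma>A. strategy_Adam (game p K n) \<sigma>A \<Longrightarrow>
      cost (game p K n) (outcome (game p K n) \<sigma>E \<sigma>A (init (game p K n))) = Some (thr (game p K n))"
    using wins unfolding Eve_wins_equality_def by blast
  define \<sigma>A where "\<sigma>A = strategy_of p K n (adam_choice p)"
  have \<sigma>A: "strategy_Adam (game p K n) \<sigma>A"
    unfolding \<sigma>A_def using regs adam_choice_succs by (rule strategy_Adam_of)
  let ?\<pi> = "outcome (game p K n) \<sigma>E \<sigma>A (init (game p K n))"
  interpret adam_play p K "\<lambda>k. node_at p K (?\<pi> k)" "path_weight (game p K n) ?\<pi>"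
  proof (rule adam_play.intro[OF play_outcome_game[OF regs \<sigma>E \<sigma>A]], unfold_locales)
    show "node_at p K (?\<pi> (Suc k)) = adam_choice p (node_at p K (?\<pi> k)) (path_weight (game p K n) ?\<pi> k)"
      if "\<not> eve_node (node_at p K (?\<pi> k))" for k
      using that adam_choice_succs
      by (intro node_at_outcome_strategy_of[OF regs \<sigma>E \<sigma>A]) (simp_all add: \<sigma>A_def)
  qed
  from wins[OF \<sigma>A] obtain l where "node_at p K (?\<pi> l) = Target"
    and weights: "path_weight (game p K n) ?\<pi> (LEAST l. node_at p K (?\<pi> l) = Target) 0 = int n"
      "\<forall>j<K. path_weight (game p K n) ?\<pi> (LEAST l. node_at p K (?\<pi> l) = Target) (Suc j) = 0"
    unfolding cost_outcome_game[OF regs \<sigma>E \<sigma>A] by blast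
  then have "node_at p K (?\<pi> (LEAST l. node_at p K (?\<pi> l) = Target)) = Target"
    by (intro LeastI)
  from this weights show ?thesis
    by (rule halts_if_Target_threshold)
qed

lemma Eve_wins_game_if_halts:
  assumes regs: "regs_below p K" and halts: "halts p n"
  shows "Eve_wins_equality (game p K n)"
proof -
  define \<sigma>E where "\<sigma>E = strategy_of p K n (eve_choice p K n)"
  have \<sigma>E: "strategy_Eve (game p K n) \<sigma>E"
    unfolding \<sigma>E_def using regs eve_choice_succs by (rule strategy_Eve_of)
  have "cost (game p K n) (outcome (game p K n) \<sigma>E \<sigma>A (init (game p K n))) = Some (thr (game p K n))"
    if \<sigma>A: "strategy_Adam (game p K n) \<sigma>A" for \<sigma>A
  proof -
    let ?\<pi> = "outcome (game p K n) \<sigma>E \<sigma>A (init (game p K n))"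
    interpret eve_play p K "\<lambda>k. node_at p K (?\<pi> k)" "path_weight (game p K n) ?\<pi>" n
    proof (rule eve_play.intro[OF play_outcome_game[OF regs \<sigma>E \<sigma>A]], unfold_locales)
      show "node_at p K (?\<pi> (Suc k)) = eve_choice p K n (node_at p K (?\<pi> k)) (path_weight (game p K n) ?\<pi> k)"
        if "eve_node (node_at p K (?\<pi> k))" for k
        using that eve_choice_succs
        by (intro node_at_outcome_strategy_of[OF regs \<sigma>E \<sigma>A]) (simp_all add: \<sigma>E_def)
    qed
    obtain l where "node_at p K (?\<pi> l) = Target"
      using reaches_Target[OF halts] by blast
    then have "node_at p K (?\<pi> (LEAST l. node_at p K (?\<pi> l) = Target)) = Target"
      by (rule LeastI)
    with \<open>node_at p K (?\<pi> l) = Target\<close> show ?thesis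
      unfolding cost_outcome_game[OF regs \<sigma>E \<sigma>A] using Target_threshold by blast
  qed
  with \<sigma>E show ?thesis
    unfolding Eve_wins_equality_def by blast
qed

theorem Eve_wins_game_iff_halts: "regs_below p K \<Longrightarrow> Eve_wins_equality (game p K n) \<longleftrightarrow> halts p n"
  using halts_if_Eve_wins_game Eve_wins_game_if_halts by blast

section \<open>Undecidability\<close>

lemma inj_enc_ints: "inj enc_ints"
  by (rule injI) (simp add: enc_ints_def list_encode_eq inj_map_eq_map inj_int_encode)

lemma inj_encode_instance: "inj encode_instance"
proof (rule injI)
  fix I J
  assume eq: "encode_instance I = encode_instance J"
  have "inj (\<lambda>b :: bool. if b then 1 else (0 :: nat))"
    by (rule injI) (simp split: if_splits)
  moreover have "inj (\<lambda>(u :: nat, v :: nat, ws). list_encode [u, v, enc_ints ws])"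
    by (rule injI) (auto simp: list_encode_eq inj_eq[OF inj_enc_ints])
  ultimately show "I = J"
    using eq by (cases I, cases J) (simp add: encode_instance_def list_encode_eq inj_map_eq_map inj_eq[OF inj_enc_ints])
qed

lemma encode_instance_in_EqualitySP:
  "well_formed I \<Longrightarrow> encode_instance I \<in> EqualitySP \<longleftrightarrow> Eve_wins_equality I"
  unfolding EqualitySP_def by (auto simp: inj_eq[OF inj_encode_instance])

text \<open>diag_code e is e with the first threshold entry replaced by e itself: components 0 to 4 of
  an instance code are copied, and int_encode (int e) = e + e.\<close>

definition diag_code :: "nat \<Rightarrow> nat" where
  "diag_code e = list_encode [code_nth 0 e, code_nth 1 e, code_nth 2 e, code_nth 3 e, code_nth 4 e,
     Suc (prod_encode (e + e, code_tl (code_nth 5 e)))]"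

lemma diag_code_encode_instance:
  assumes thr: "thr I = t # ts"
  shows "diag_code (encode_instance I) = encode_instance (I\<lparr>thr := int (encode_instance I) # ts\<rparr>)"
proof -
  define E where "E = encode_instance I"
  define xs where "xs = [num_v I, list_encode (map (\<lambda>b. if b then 1 else 0) (owner I)),
     list_encode (map (\<lambda>(u, v, ws). list_encode [u, v, enc_ints ws]) (edges I)),
     list_encode (target I), init I, enc_ints (thr I)]"
  have "E = list_encode xs"
    unfolding E_def encode_instance_def xs_def ..
  then have nth: "code_nth k E = xs ! k" if "k < 6" for k
    using that by (simp add: xs_def del: list_encode.simps)
  show ?thesis
    unfolding E_def[symmetric] diag_code_def
    by (simp add: nth xs_def thr enc_ints_def encode_instance_def int_encode_def sum_encode_def code_tl_def)
qed

definition r_diag_code :: recf where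
  "r_diag_code = r_list [r_nth 0, r_nth 1, r_nth 2, r_nth 3, r_nth 4,
     Cn r_Cons [Cn r_add [Id 0, Id 0], Cn r_tl [r_nth 5]]]"

lemma eval_r_diag_code: "eval r_diag_code [e] (diag_code e)"
proof -
  have "eval (Cn r_Cons [Cn r_add [Id 0, Id 0], Cn r_tl [r_nth 5]]) [e]
      (Suc (prod_encode (e + e, code_tl (code_nth 5 e))))"
    by (rule eval_Cn2[OF eval_Cn2[OF eval_Id0 eval_Id0 eval_r_add] eval_Cn1[OF eval_r_nth eval_r_tl]
          eval_r_Cons])
  then show ?thesis
    unfolding r_diag_code_def diag_code_def by (intro eval_r_list) (simp add: eval_r_nth)
qed

theorem theorem14:
  shows "\<not> decidable_set EqualitySP"
proof
  assume "decidable_set EqualitySP"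
  then obtain f where f: "\<And>x. (x \<in> EqualitySP \<longrightarrow> eval f [x] 0) \<and> (x \<notin> EqualitySP \<longrightarrow> eval f [x] 1)"
    unfolding decidable_set_def by blast
  define g where "g = Cn f [r_diag_code]"
  have g: "eval g [e] (if diag_code e \<in> EqualitySP then 0 else 1)" for e
    unfolding g_def using f by (intro eval_Cn1[OF eval_r_diag_code]) simp
  define p where "p = prog g"
  define K where "K = Suc (sum_list (map instr_reg p))"
  have regs: "regs_below p K"
    unfolding K_def by (rule regs_below_sum_list)
  define e where "e = encode_instance (game p K 0)"
  have "diag_code e = encode_instance (game p K e)"
    unfolding e_def diag_code_encode_instance[OF thr_game] by (simp add: game_def)
  then have "diag_code e \<in> EqualitySP \<longleftrightarrow> Eve_wins_equality (game p K e)"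
    using encode_instance_in_EqualitySP[OF well_formed_game[OF regs]] by simp
  also have "\<dots> \<longleftrightarrow> halts p e"
    by (rule Eve_wins_game_iff_halts[OF regs])
  also have "\<dots> \<longleftrightarrow> diag_code e \<notin> EqualitySP"
    unfolding p_def using halts_prog[OF g] by simp
  finally show False
    by blast
qed

end
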